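(* Let $K$ be a non-archimedean local field. If $n\ge 7$, or $n=6$ and $\mathrm{char}(K)\neq 3$, then every representation (homomorphism) $\rho\colon A_n\to\mathrm{PSL}_2(K)$ of the alternating group $A_n$ lifts to $\mathrm{SL}_2(K)$ (i.e. there is a homomorphism $\bar\rho\colon A_n\to\mathrm{SL}_2(K)$ with $\pi\circ\bar\rho=\rho$, where $\pi\colon\mathrm{SL}_2(K)\to\mathrm{PSL}_2(K)$ is the quotient map), but $H^2(A_n,\mathbb{Z}/2\mathbb{Z})\neq 0$.
   Context: $H^2(A_n,\mathbb{Z}/2\mathbb{Z})$ denotes group cohomology with trivial coefficients. *)

theory Defs
  imports "HOL-Algebra.Sym_Groups" "HOL-Algebra.Coset"
begin

text \<open>A non-archimedean local field: a field complete with respect to a normalized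
discrete valuation v (values only relevant on nonzero elements) whose residue field
O/m is finite.\<close>

definition discrete_valuation :: "('k::field \<Rightarrow> int) \<Rightarrow> bool" where
  "discrete_valuation v \<longleftrightarrow>
     (\<forall>x y. x \<noteq> 0 \<longrightarrow> y \<noteq> 0 \<longrightarrow> v (x * y) = v x + v y) \<and>
     (\<forall>x y. x \<noteq> 0 \<longrightarrow> y \<noteq> 0 \<longrightarrow> x + y \<noteq> 0 \<longrightarrow> v (x + y) \<ge> min (v x) (v y)) \<and>
     (\<forall>n. \<exists>x. x \<noteq> 0 \<and> v x = n)"

definition val_ring :: "('k::field \<Rightarrow> int) \<Rightarrow> 'k set" where
  "val_ring v = {x. x = 0 \<or> v x \<ge> 0}"

definition val_ideal :: "('k::field \<Rightarrow> int) \<Rightarrow> 'k set" where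
  "val_ideal v = {x. x = 0 \<or> v x > 0}"

definition residue_rel :: "('k::field \<Rightarrow> int) \<Rightarrow> ('k \<times> 'k) set" where
  "residue_rel v = {(x, y). x \<in> val_ring v \<and> y \<in> val_ring v \<and> x - y \<in> val_ideal v}"

text \<open>Convergence / Cauchy property for the valuation topology (|x| = q^(-v x)).\<close>
definition val_cauchy :: "('k::field \<Rightarrow> int) \<Rightarrow> (nat \<Rightarrow> 'k) \<Rightarrow> bool" where
  "val_cauchy v a \<longleftrightarrow> (\<forall>N::int. \<exists>M. \<forall>m\<ge>M. \<forall>n\<ge>M. a m = a n \<or> v (a m - a n) \<ge> N)"

definition val_converges :: "('k::field \<Rightarrow> int) \<Rightarrow> (nat \<Rightarrow> 'k) \<Rightarrow> 'k \<Rightarrow> bool" where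
  "val_converges v a L \<longleftrightarrow> (\<forall>N::int. \<exists>M. \<forall>m\<ge>M. a m = L \<or> v (a m - L) \<ge> N)"

definition nonarch_local_field :: "('k::field \<Rightarrow> int) \<Rightarrow> bool" where
  "nonarch_local_field v \<longleftrightarrow>
     discrete_valuation v \<and>
     (\<forall>a. val_cauchy v a \<longrightarrow> (\<exists>L. val_converges v a L)) \<and>
     finite (val_ring v // residue_rel v)"

datatype 'k mat2 = M2 'k 'k 'k 'k

fun mat2_mult :: "'k::comm_ring_1 mat2 \<Rightarrow> 'k mat2 \<Rightarrow> 'k mat2" where
  "mat2_mult (M2 a b c d) (M2 a' b' c' d') =
     M2 (a * a' + b * c') (a * b' + b * d') (c * a' + d * c') (c * b' + d * d')"

fun mat2_det :: "'k::comm_ring_1 mat2 \<Rightarrow> 'k" where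
  "mat2_det (M2 a b c d) = a * d - b * c"

definition mat2_id :: "'k::comm_ring_1 mat2" where
  "mat2_id = M2 1 0 0 1"

definition mat2_negid :: "'k::comm_ring_1 mat2" where
  "mat2_negid = M2 (-1) 0 0 (-1)"

definition SL2 :: "'k::field itself \<Rightarrow> 'k mat2 monoid" where
  "SL2 _ = \<lparr>carrier = {A. mat2_det A = 1}, mult = mat2_mult, one = mat2_id\<rparr>"

definition PSL2 :: "'k::field itself \<Rightarrow> 'k mat2 set monoid" where
  "PSL2 K = SL2 K Mod {mat2_id, mat2_negid}"

definition PSL2_proj :: "'k::field itself \<Rightarrow> 'k mat2 \<Rightarrow> 'k mat2 set" where
  "PSL2_proj K A = {mat2_id, mat2_negid} #>\<^bsub>SL2 K\<^esub> A"

text \<open>Z/2Z is modelled as bool with addition = exclusive or (\<noteq>).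
Inhomogeneous 2-cochains are functions G x G -> Z/2Z (extensional: False outside carrier).\<close>

definition cocycles2_Z2 :: "('g, 'm) monoid_scheme \<Rightarrow> ('g \<Rightarrow> 'g \<Rightarrow> bool) set" where
  "cocycles2_Z2 G = {f.
     (\<forall>x y. (x \<notin> carrier G \<or> y \<notin> carrier G) \<longrightarrow> \<not> f x y) \<and>
     (\<forall>g\<in>carrier G. \<forall>h\<in>carrier G. \<forall>k\<in>carrier G.
        (f h k \<noteq> f (g \<otimes>\<^bsub>G\<^esub> h) k) = (f g (h \<otimes>\<^bsub>G\<^esub> k) \<noteq> f g h))}"

definition coboundaries2_Z2 :: "('g, 'm) monoid_scheme \<Rightarrow> ('g \<Rightarrow> 'g \<Rightarrow> bool) set" where
  "coboundaries2_Z2 G = {f. \<exists>c :: 'g \<Rightarrow> bool.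
     f = (\<lambda>g h. if g \<in> carrier G \<and> h \<in> carrier G
                then (c h \<noteq> c (g \<otimes>\<^bsub>G\<^esub> h)) \<noteq> c g else False)}"

definition H2_Z2_nonzero :: "('g, 'm) monoid_scheme \<Rightarrow> bool" where
  "H2_Z2_nonzero G \<longleftrightarrow> (\<exists>f \<in> cocycles2_Z2 G. f \<notin> coboundaries2_Z2 G)"

end

theory Submission
  imports Defs Complex_Main
begin

text \<open>Only the characteristic of \<open>K\<close> matters.
  Every homomorphism \<open>A\<^sub>n \<rightarrow> PSL\<^sub>2(K)\<close> is trivial and hence lifts. Away from characteristic 3,
  the commuting 3-cycles \<open>(1 2 3)\<close> and \<open>(4 5 6)\<close> would map into the centraliser of a non-scalar
  matrix \<open>X\<close>, which is \<open>{\<alpha> I + \<beta> X}\<close> and contains no \<open>C\<^sub>3 \<times> C\<^sub>3\<close> modulo \<open>\<plusminus>I\<close>; in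
  characteristic 3 an element of order 3 and a commuting involution cannot both survive. So some
  3-cycle, or product of two disjoint ones, is in the kernel, and the normal closure of it is \<open>A\<^sub>n\<close>.

  For \<open>H\<^sup>2(A\<^sub>n, \<int>/2) \<noteq> 0\<close>, lift each even permutation \<open>g\<close> to an even unit \<open>u\<^sub>g\<close> of the real
  Clifford algebra with \<open>u\<^sub>g e\<^sub>i u\<^sub>g\<^sup>-\<^sup>1 = e\<^bsub>g(i)\<^esub>\<close>. Lifts are unique up to a real factor, so
  \<open>u\<^sub>g u\<^sub>h = \<mu>(g,h) u\<^bsub>gh\<^esub>\<close> and the sign of \<open>\<mu>\<close> is a 2-cocycle. A coboundary takes equal values
  at \<open>(a,a)\<close> and \<open>(1,1)\<close> for an involution \<open>a\<close>, whereas \<open>(1 2)(3 4)\<close> lifts to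
  \<open>(e\<^sub>1 - e\<^sub>2)(e\<^sub>3 - e\<^sub>4)\<close>, whose square is \<open>-4\<close>.\<close>

section \<open>\<open>2 \<times> 2\<close> matrices\<close>

fun mat2_neg :: "'k::comm_ring_1 mat2 \<Rightarrow> 'k mat2" where
  "mat2_neg (M2 a b c d) = M2 (-a) (-b) (-c) (-d)"

fun mat2_trace :: "'k::comm_ring_1 mat2 \<Rightarrow> 'k" where
  "mat2_trace (M2 a b c d) = a + d"

definition mat2_lincomb :: "'k::comm_ring_1 \<Rightarrow> 'k \<Rightarrow> 'k mat2 \<Rightarrow> 'k mat2" where
  "mat2_lincomb \<alpha> \<beta> A = (case A of M2 a b c d \<Rightarrow> M2 (\<alpha> + \<beta> * a) (\<beta> * b) (\<beta> * c) (\<alpha> + \<beta> * d))"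

definition mat2_scalar :: "'k::comm_ring_1 mat2 \<Rightarrow> bool" where
  "mat2_scalar A \<longleftrightarrow> (\<exists>s. A = M2 s 0 0 s)"

lemma mat2_mult_assoc: "mat2_mult (mat2_mult A B) C = mat2_mult A (mat2_mult B C)"
  by (cases A; cases B; cases C) (simp add: algebra_simps)

lemma mat2_det_mult: "mat2_det (mat2_mult A B) = mat2_det A * mat2_det B"
  by (cases A; cases B) (simp add: algebra_simps)

lemma mat2_id_mult [simp]: "mat2_mult mat2_id A = A" "mat2_mult A mat2_id = A"
  by (cases A; simp add: mat2_id_def)+

lemma mat2_negid_mult [simp]: "mat2_mult mat2_negid A = mat2_neg A" "mat2_mult A mat2_negid = mat2_neg A"
  by (cases A; simp add: mat2_negid_def)+

lemma mat2_det_id [simp]: "mat2_det mat2_id = 1" "mat2_det mat2_negid = 1"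
  by (simp_all add: mat2_id_def mat2_negid_def)

lemma mat2_neg_id [simp]: "mat2_neg mat2_id = mat2_negid" "mat2_neg mat2_negid = mat2_id"
  by (simp_all add: mat2_id_def mat2_negid_def)

lemma mat2_lincomb_simps [simp]:
  "mat2_lincomb 0 1 A = A"
  "mat2_lincomb 1 0 A = mat2_id"
  "mat2_lincomb (-1) 0 A = mat2_negid"
  "mat2_neg (mat2_lincomb \<alpha> \<beta> A) = mat2_lincomb (-\<alpha>) (-\<beta>) A"
  by (cases A; simp add: mat2_lincomb_def mat2_id_def mat2_negid_def)+

text \<open>Cayley--Hamilton: \<open>A\<^sup>2 = (tr A) A - (det A) I\<close>.\<close>
lemma mat2_lincomb_mult:
  "mat2_mult (mat2_lincomb \<alpha> \<beta> A) (mat2_lincomb \<gamma> \<delta> A) =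
     mat2_lincomb (\<alpha> * \<gamma> - \<beta> * \<delta> * mat2_det A) (\<alpha> * \<delta> + \<beta> * \<gamma> + \<beta> * \<delta> * mat2_trace A) A"
  by (cases A) (simp add: mat2_lincomb_def algebra_simps)

lemma mat2_det_lincomb:
  "mat2_det (mat2_lincomb \<alpha> \<beta> A) = \<alpha> * \<alpha> + \<alpha> * \<beta> * mat2_trace A + \<beta> * \<beta> * mat2_det A"
  by (cases A) (simp add: mat2_lincomb_def algebra_simps)

lemma mat2_trace_lincomb: "mat2_trace (mat2_lincomb \<alpha> \<beta> A) = 2 * \<alpha> + \<beta> * mat2_trace A"
  by (cases A) (simp add: mat2_lincomb_def algebra_simps)

lemma mat2_scalar_lincomb: "mat2_scalar (mat2_lincomb \<alpha> 0 A)"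
  by (cases A) (simp add: mat2_lincomb_def mat2_scalar_def)

lemma mat2_lincomb_eq_iff:
  fixes A :: "'k::field mat2"
  assumes "\<not> mat2_scalar A"
  shows "mat2_lincomb \<alpha> \<beta> A = mat2_lincomb \<gamma> \<delta> A \<longleftrightarrow> \<alpha> = \<gamma> \<and> \<beta> = \<delta>"
proof
  assume eq: "mat2_lincomb \<alpha> \<beta> A = mat2_lincomb \<gamma> \<delta> A"
  obtain a b c d where A: "A = M2 a b c d" by (cases A)
  from eq have "(\<beta> - \<delta>) * b = 0" "(\<beta> - \<delta>) * c = 0" "(\<beta> - \<delta>) * (a - d) = 0"
    by (simp_all add: A mat2_lincomb_def algebra_simps) algebra
  moreover have "b \<noteq> 0 \<or> c \<noteq> 0 \<or> a - d \<noteq> 0"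
    using assms by (auto simp: A mat2_scalar_def)
  ultimately have "\<beta> = \<delta>" by auto
  with eq show "\<alpha> = \<gamma> \<and> \<beta> = \<delta>" by (simp add: A mat2_lincomb_def)
qed simp

lemma mat2_centralizer:
  fixes A B :: "'k::field mat2"
  assumes "\<not> mat2_scalar A" and "mat2_mult A B = mat2_mult B A"
  shows "\<exists>\<alpha> \<beta>. B = mat2_lincomb \<alpha> \<beta> A"
proof -
  obtain a b c d where A: "A = M2 a b c d" by (cases A)
  obtain e f g h where B: "B = M2 e f g h" by (cases B)
  from assms(2) have "a * e + b * g = e * a + f * c" "a * f + b * h = e * b + f * d"
    "c * e + d * g = g * a + h * c"
    by (simp_all add: A B)
  then have comm: "b * g = c * f" "f * (a - d) = b * (e - h)" "c * (e - h) = g * (a - d)"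
    by algebra+
  have "\<exists>\<beta>. f = \<beta> * b \<and> g = \<beta> * c \<and> e - h = \<beta> * (a - d)"
  proof -
    consider "b \<noteq> 0" | "c \<noteq> 0" | "b = 0" "c = 0" "a - d \<noteq> 0"
      using assms(1) by (auto simp: A mat2_scalar_def)
    then show ?thesis
    proof cases
      case 1
      with comm show ?thesis by (intro exI[of _ "f / b"]) (auto simp: field_simps)
    next
      case 2
      with comm show ?thesis by (intro exI[of _ "g / c"]) (auto simp: field_simps)
    next
      case 3
      with comm show ?thesis by (intro exI[of _ "(e - h) / (a - d)"]) auto
    qed
  qed
  then obtain \<beta> where "f = \<beta> * b" "g = \<beta> * c" "e - h = \<beta> * (a - d)" by blast
  then have "B = mat2_lincomb (e - \<beta> * a) \<beta> A"
    by (simp add: A B mat2_lincomb_def algebra_simps)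
  then show ?thesis by blast
qed

lemma mat2_square_SL2:
  "mat2_det A = 1 \<Longrightarrow> mat2_mult A A = mat2_lincomb (-1) (mat2_trace A) A"
  using mat2_lincomb_mult[of 0 1 A 0 1] by simp

lemma mat2_cube_SL2:
  "mat2_det A = 1 \<Longrightarrow>
     mat2_mult A (mat2_mult A A) = mat2_lincomb (- mat2_trace A) (mat2_trace A * mat2_trace A - 1) A"
  using mat2_lincomb_mult[of 0 1 A "-1" "mat2_trace A"] by (simp add: mat2_square_SL2)

lemma mat2_scalar_SL2:
  fixes A :: "'k::field mat2"
  assumes "mat2_scalar A" "mat2_det A = 1"
  shows "A = mat2_id \<or> A = mat2_negid"
proof -
  obtain s where A: "A = M2 s 0 0 s" using assms(1) by (auto simp: mat2_scalar_def)
  then have "s = 1 \<or> s = -1" using assms(2) square_eq_1_iff[of s] by simp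
  then show ?thesis by (auto simp: A mat2_id_def mat2_negid_def)
qed

lemma SL2_trace_square_if_cube_scalar:
  fixes A :: "'k::field mat2"
  assumes "mat2_det A = 1" "\<not> mat2_scalar A"
    and "mat2_mult A (mat2_mult A A) = mat2_id \<or> mat2_mult A (mat2_mult A A) = mat2_negid"
  shows "mat2_trace A * mat2_trace A = 1"
proof -
  obtain e where "mat2_mult A (mat2_mult A A) = mat2_lincomb e 0 A"
    using assms(3) mat2_lincomb_simps(2,3) by metis
  then show ?thesis
    using assms(1,2) by (simp add: mat2_cube_SL2 mat2_lincomb_eq_iff)
qed

text \<open>Conjugating by \<open>B\<close> preserves the trace, so \<open>A B = - B A\<close> forces \<open>tr A = - tr A\<close>.\<close>
lemma mat2_anticommute_trace:
  fixes A B :: "'k::field mat2"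
  assumes "mat2_det B = 1" and "mat2_mult A B = mat2_neg (mat2_mult B A)"
  shows "2 * mat2_trace A = 0"
proof -
  obtain a b c d where A: "A = M2 a b c d" by (cases A)
  obtain e f g h where B: "B = M2 e f g h" by (cases B)
  from assms(2) have "a*e + b*g = -(e*a + f*c)" "a*f + b*h = -(e*b + f*d)"
    "c*e + d*g = -(g*a + h*c)" "c*f + d*h = -(g*b + h*d)"
    by (simp_all only: A B mat2_mult.simps mat2_neg.simps mat2.inject)
  then have "a*e + b*g + (e*a + f*c) = 0" "a*f + b*h + (e*b + f*d) = 0"
    "c*e + d*g + (g*a + h*c) = 0" "c*f + d*h + (g*b + h*d) = 0"
    by (simp_all only: eq_neg_iff_add_eq_0)
  moreover have "2*(a+d) = h*(a*e+b*g+(e*a+f*c)) - f*(c*e+d*g+(g*a+h*c)) - g*(a*f+b*h+(e*b+f*d))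
      + e*(c*f+d*h+(g*b+h*d)) - 2*(a+d)*(e*h - f*g - 1)"
    by algebra
  ultimately show ?thesis using assms(1) by (simp add: A B)
qed

lemma mat2_commute_if_commute_up_to_sign:
  fixes A B :: "'k::field mat2"
  assumes "mat2_det B = 1" "mat2_trace A * mat2_trace A = 1"
    and "mat2_mult A B = mat2_mult B A \<or> mat2_mult A B = mat2_neg (mat2_mult B A)"
  shows "mat2_mult A B = mat2_mult B A"
proof (cases "(2::'k) = 0")
  case True
  then have "mat2_neg M = M" for M :: "'k mat2"
    by (cases M) (simp add: neg_eq_iff_add_eq_0 flip: mult_2)
  then show ?thesis using assms(3) by simp
next
  case False
  then show ?thesis using assms mat2_anticommute_trace[of B A] by auto
qed

section \<open>Torsion in \<open>PSL\<^sub>2(K)\<close>\<close>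

lemma SL2_simps [simp]:
  "carrier (SL2 K) = {A. mat2_det A = 1}" "mult (SL2 K) = mat2_mult" "one (SL2 K) = mat2_id"
  by (simp_all add: SL2_def)

lemma SL2_group: "group (SL2 (K :: 'k::field itself))"
proof (rule groupI)
  fix A assume "A \<in> carrier (SL2 K)"
  then obtain a b c d where "A = M2 a b c d" "a * d - b * c = 1" by (cases A) auto
  then show "\<exists>B\<in>carrier (SL2 K). B \<otimes>\<^bsub>SL2 K\<^esub> A = \<one>\<^bsub>SL2 K\<^esub>"
    by (intro bexI[of _ "M2 d (-b) (-c) a"]) (auto simp: mat2_id_def algebra_simps)
qed (auto simp: mat2_det_mult mat2_mult_assoc)

lemma SL2_center_rcoset: "{mat2_id, mat2_negid} #>\<^bsub>SL2 K\<^esub> A = {A, mat2_neg A}"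
  by (auto simp: r_coset_def)

lemma SL2_center_normal: "{mat2_id, mat2_negid} \<lhd> SL2 (K :: 'k::field itself)"
proof -
  interpret group "SL2 K" by (rule SL2_group)
  have "subgroup {mat2_id, mat2_negid} (SL2 K)"
  proof (rule subgroupI)
    fix A :: "'k mat2" assume "A \<in> {mat2_id, mat2_negid}"
    moreover have "inv\<^bsub>SL2 K\<^esub> mat2_id = mat2_id" "inv\<^bsub>SL2 K\<^esub> mat2_negid = mat2_negid"
      by (auto intro!: inv_equality)
    ultimately show "inv\<^bsub>SL2 K\<^esub> A \<in> {mat2_id, mat2_negid}" by auto
  qed auto
  moreover have "{mat2_id, mat2_negid} #>\<^bsub>SL2 K\<^esub> A = A <#\<^bsub>SL2 K\<^esub> {mat2_id, mat2_negid}" for A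
    by (auto simp: r_coset_def l_coset_def)
  ultimately show ?thesis by (auto intro: normalI)
qed

lemma PSL2_group: "group (PSL2 (K :: 'k::field itself))"
  unfolding PSL2_def by (rule normal.factorgroup_is_group[OF SL2_center_normal])

lemma PSL2_proj_hom: "PSL2_proj K \<in> hom (SL2 K) (PSL2 (K :: 'k::field itself))"
  unfolding PSL2_proj_def PSL2_def by (rule normal.r_coset_hom_Mod[OF SL2_center_normal])

lemma PSL2_carrier: "carrier (PSL2 K) = PSL2_proj K ` carrier (SL2 K)"
  by (simp add: PSL2_def PSL2_proj_def carrier_FactGroup)

lemma PSL2_proj_eq_iff: "PSL2_proj K A = PSL2_proj K B \<longleftrightarrow> A = B \<or> A = mat2_neg B"
  by (cases A; cases B) (auto simp: PSL2_proj_def SL2_center_rcoset)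

lemma PSL2_one: "\<one>\<^bsub>PSL2 K\<^esub> = PSL2_proj K mat2_id"
  by (simp add: PSL2_def PSL2_proj_def SL2_center_rcoset)

lemma PSL2_proj_eq_one_iff: "PSL2_proj K A = \<one>\<^bsub>PSL2 K\<^esub> \<longleftrightarrow> A = mat2_id \<or> A = mat2_negid"
  by (auto simp: PSL2_one PSL2_proj_eq_iff)

lemma PSL2_proj_mult:
  "mat2_det A = 1 \<Longrightarrow> mat2_det B = 1 \<Longrightarrow>
     PSL2_proj K A \<otimes>\<^bsub>PSL2 K\<^esub> PSL2_proj K B = PSL2_proj (K :: 'k::field itself) (mat2_mult A B)"
  using hom_mult[OF PSL2_proj_hom, where ?x = A and ?y = B] by simp

lemma PSL2_proj_lincomb_neg:
  "PSL2_proj K (mat2_lincomb (-\<alpha>) (-\<beta>) A) = PSL2_proj K (mat2_lincomb \<alpha> \<beta> A)"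
  by (simp add: PSL2_proj_eq_iff flip: mat2_lincomb_simps(4))

lemma PSL2_carrierE:
  assumes "x \<in> carrier (PSL2 K)"
  obtains X where "mat2_det X = 1" "x = PSL2_proj K X"
  using assms by (auto simp: PSL2_carrier)

lemma PSL2_proj_scalar:
  fixes X :: "'k::field mat2"
  assumes "mat2_det X = 1" "mat2_scalar X"
  shows "PSL2_proj K X = \<one>\<^bsub>PSL2 K\<^esub>"
  using mat2_scalar_SL2[OF assms(2,1)] by (simp add: PSL2_proj_eq_one_iff)

lemma PSL2_trace_square_if_cube_one:
  fixes X :: "'k::field mat2"
  assumes "mat2_det X = 1" "\<not> mat2_scalar X"
    and "PSL2_proj K X \<otimes>\<^bsub>PSL2 K\<^esub> (PSL2_proj K X \<otimes>\<^bsub>PSL2 K\<^esub> PSL2_proj K X) = \<one>\<^bsub>PSL2 K\<^esub>"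
  shows "mat2_trace X * mat2_trace X = 1"
  using assms by (intro SL2_trace_square_if_cube_scalar) (simp_all add: PSL2_proj_mult mat2_det_mult PSL2_proj_eq_one_iff)

lemma PSL2_commuting_lincomb:
  fixes X Y :: "'k::field mat2"
  assumes "mat2_det X = 1" "mat2_det Y = 1" "\<not> mat2_scalar X" "mat2_trace X * mat2_trace X = 1"
    and "PSL2_proj K X \<otimes>\<^bsub>PSL2 K\<^esub> PSL2_proj K Y = PSL2_proj K Y \<otimes>\<^bsub>PSL2 K\<^esub> PSL2_proj K X"
  obtains \<alpha> \<beta> where "Y = mat2_lincomb \<alpha> \<beta> X"
proof -
  have "mat2_mult X Y = mat2_mult Y X"
    using assms by (intro mat2_commute_if_commute_up_to_sign) (simp_all add: PSL2_proj_mult PSL2_proj_eq_iff)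
  then show ?thesis using mat2_centralizer assms(3) that by blast
qed

text \<open>The coefficients of a determinant-one matrix \<open>\<alpha> I + \<beta> X\<close> of trace \<open>t'\<close>, where \<open>tr X = t\<close>.\<close>
lemma order3_lincomb_coefficients:
  fixes \<alpha> \<beta> t t' :: "'k::field"
  assumes three: "(3::'k) \<noteq> 0" and t: "t * t = 1" and t': "t' * t' = 1"
    and tr: "2 * \<alpha> + \<beta> * t = t'" and det: "\<alpha> * \<alpha> + \<alpha> * \<beta> * t + \<beta> * \<beta> = 1"
  shows "(\<alpha> = 0 \<and> \<beta> = t * t') \<or> (\<alpha> = t' \<and> \<beta> = - (t * t'))"
proof -
  have "t * (2 * \<alpha> + \<beta> * t) = t * t'" using tr by simp
  then have \<beta>: "\<beta> = t * t' - 2 * \<alpha> * t" using t by (simp add: algebra_simps)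
  have "\<alpha> * \<alpha> + \<alpha> * \<beta> * t + \<beta> * \<beta> =
      \<alpha> * \<alpha> + \<alpha> * t' * (t * t) - 2 * \<alpha> * \<alpha> * (t * t) + (t * t) * (t' * t')
      - 4 * \<alpha> * t' * (t * t) + 4 * \<alpha> * \<alpha> * (t * t)"
    unfolding \<beta> by algebra
  then have "3 * (\<alpha> * (\<alpha> - t')) = 0" using t t' det by algebra
  then have "\<alpha> = 0 \<or> \<alpha> = t'" using three by simp
  then show ?thesis
  proof
    assume "\<alpha> = t'"
    then have "\<beta> = - (t * t')" by (simp add: \<beta> algebra_simps)
    with \<open>\<alpha> = t'\<close> show ?thesis by simp
  qed (simp add: \<beta>)
qed

lemma PSL2_commuting_order3_nonscalar:
  fixes X Y :: "'k::field mat2"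
  assumes three: "(3::'k) \<noteq> 0"
    and X: "mat2_det X = 1" "\<not> mat2_scalar X" and Y: "mat2_det Y = 1" "\<not> mat2_scalar Y"
    and X3: "PSL2_proj K X \<otimes>\<^bsub>PSL2 K\<^esub> (PSL2_proj K X \<otimes>\<^bsub>PSL2 K\<^esub> PSL2_proj K X) = \<one>\<^bsub>PSL2 K\<^esub>"
    and Y3: "PSL2_proj K Y \<otimes>\<^bsub>PSL2 K\<^esub> (PSL2_proj K Y \<otimes>\<^bsub>PSL2 K\<^esub> PSL2_proj K Y) = \<one>\<^bsub>PSL2 K\<^esub>"
    and XY: "PSL2_proj K X \<otimes>\<^bsub>PSL2 K\<^esub> PSL2_proj K Y = PSL2_proj K Y \<otimes>\<^bsub>PSL2 K\<^esub> PSL2_proj K X"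
  shows "PSL2_proj K Y = PSL2_proj K X \<or> PSL2_proj K Y = PSL2_proj K (mat2_mult X X)"
proof -
  define t t' where "t = mat2_trace X" and "t' = mat2_trace Y"
  have tt: "t * t = 1" using PSL2_trace_square_if_cube_one X X3 unfolding t_def by blast
  have tt': "t' * t' = 1" using PSL2_trace_square_if_cube_one Y Y3 unfolding t'_def by blast
  obtain \<alpha> \<beta> where Y_eq: "Y = mat2_lincomb \<alpha> \<beta> X"
    using PSL2_commuting_lincomb[OF X(1) Y(1) X(2) tt[unfolded t_def] XY] by blast
  have "2 * \<alpha> + \<beta> * t = t'" "\<alpha> * \<alpha> + \<alpha> * \<beta> * t + \<beta> * \<beta> = 1"
    using X(1) Y(1) by (simp_all add: t_def t'_def Y_eq mat2_trace_lincomb mat2_det_lincomb)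
  then consider "\<alpha> = 0" "\<beta> = t * t'" | "\<alpha> = t'" "\<beta> = - (t * t')"
    using order3_lincomb_coefficients[OF three tt tt'] by blast
  then show ?thesis
  proof cases
    case 1
    have "(t * t') * (t * t') = (t * t) * (t' * t')" by (simp only: mult_ac)
    then have "t * t' = 1 \<or> t * t' = -1" using tt tt' square_eq_1_iff[of "t * t'"] by simp
    moreover have "PSL2_proj K (mat2_lincomb 0 (-1) X) = PSL2_proj K X"
      using PSL2_proj_lincomb_neg[of K 0 1 X] by simp
    ultimately show ?thesis
      unfolding Y_eq 1 by (elim disjE) simp_all
  next
    case 2
    have "t' = 1 \<or> t' = -1" using tt' square_eq_1_iff by blast
    moreover have "PSL2_proj K (mat2_lincomb 1 (- t) X) = PSL2_proj K (mat2_lincomb (-1) t X)"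
      using PSL2_proj_lincomb_neg[of K "-1" t X] by simp
    moreover have "mat2_mult X X = mat2_lincomb (-1) t X" unfolding t_def using X(1) by (rule mat2_square_SL2)
    ultimately show ?thesis
      unfolding Y_eq 2 by (elim disjE) simp_all
  qed
qed

lemma PSL2_commuting_order3:
  fixes K :: "'k::field itself"
  assumes three: "(3::'k) \<noteq> 0"
    and x: "x \<in> carrier (PSL2 K)" and y: "y \<in> carrier (PSL2 K)"
    and x3: "x \<otimes>\<^bsub>PSL2 K\<^esub> (x \<otimes>\<^bsub>PSL2 K\<^esub> x) = \<one>\<^bsub>PSL2 K\<^esub>"
    and y3: "y \<otimes>\<^bsub>PSL2 K\<^esub> (y \<otimes>\<^bsub>PSL2 K\<^esub> y) = \<one>\<^bsub>PSL2 K\<^esub>"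
    and xy: "x \<otimes>\<^bsub>PSL2 K\<^esub> y = y \<otimes>\<^bsub>PSL2 K\<^esub> x"
  shows "x = \<one>\<^bsub>PSL2 K\<^esub> \<or> y = \<one>\<^bsub>PSL2 K\<^esub> \<or> y = x \<or> y = x \<otimes>\<^bsub>PSL2 K\<^esub> x"
proof -
  obtain X where X: "mat2_det X = 1" "x = PSL2_proj K X" using x by (rule PSL2_carrierE)
  obtain Y where Y: "mat2_det Y = 1" "y = PSL2_proj K Y" using y by (rule PSL2_carrierE)
  consider "mat2_scalar X" | "mat2_scalar Y" | "\<not> mat2_scalar X" "\<not> mat2_scalar Y" by blast
  then show ?thesis
  proof cases
    case 3
    then have "y = x \<or> y = PSL2_proj K (mat2_mult X X)"
      using PSL2_commuting_order3_nonscalar[OF three X(1) _ Y(1)] x3 y3 xy X Y by blast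
    then show ?thesis by (auto simp: X PSL2_proj_mult)
  qed (use X Y PSL2_proj_scalar in blast)+
qed

lemma PSL2_char3_commuting_order_2_3:
  fixes K :: "'k::field itself"
  assumes three: "(3::'k) = 0"
    and x: "x \<in> carrier (PSL2 K)" and y: "y \<in> carrier (PSL2 K)"
    and x3: "x \<otimes>\<^bsub>PSL2 K\<^esub> (x \<otimes>\<^bsub>PSL2 K\<^esub> x) = \<one>\<^bsub>PSL2 K\<^esub>"
    and y2: "y \<otimes>\<^bsub>PSL2 K\<^esub> y = \<one>\<^bsub>PSL2 K\<^esub>"
    and xy: "x \<otimes>\<^bsub>PSL2 K\<^esub> y = y \<otimes>\<^bsub>PSL2 K\<^esub> x"
  shows "x = \<one>\<^bsub>PSL2 K\<^esub> \<or> y = \<one>\<^bsub>PSL2 K\<^esub>"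
proof -
  obtain X where X: "mat2_det X = 1" "x = PSL2_proj K X" using x by (rule PSL2_carrierE)
  obtain Y where Y: "mat2_det Y = 1" "y = PSL2_proj K Y" using y by (rule PSL2_carrierE)
  show ?thesis
  proof (cases "mat2_scalar X")
    case nonscalar: False
    define t where "t = mat2_trace X"
    have tt: "t * t = 1" using PSL2_trace_square_if_cube_one X nonscalar x3 unfolding t_def by blast
    obtain \<alpha> \<beta> where Y_eq: "Y = mat2_lincomb \<alpha> \<beta> X"
      using PSL2_commuting_lincomb[OF X(1) Y(1) nonscalar tt[unfolded t_def]] xy X Y by metis
    have det: "\<alpha> * \<alpha> + \<alpha> * \<beta> * t + \<beta> * \<beta> = 1"
      using X(1) Y(1) by (simp add: t_def Y_eq mat2_det_lincomb)
    have "mat2_mult Y Y = mat2_id \<or> mat2_mult Y Y = mat2_negid"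
      using y2 Y by (simp add: PSL2_proj_mult PSL2_proj_eq_one_iff)
    then obtain e where "mat2_mult Y Y = mat2_lincomb e 0 X"
      using mat2_lincomb_simps(2,3) by metis
    moreover have "mat2_mult Y Y = mat2_lincomb (\<alpha> * \<alpha> - \<beta> * \<beta>) (\<beta> * (2 * \<alpha> + \<beta> * t)) X"
      using X(1) by (simp add: Y_eq mat2_lincomb_mult t_def algebra_simps)
    ultimately have square: "\<beta> * (2 * \<alpha> + \<beta> * t) = 0"
      using nonscalar by (simp add: mat2_lincomb_eq_iff)
    have "\<beta> = 0"
    proof (rule ccontr)
      assume "\<beta> \<noteq> 0"
      then have \<alpha>: "2 * \<alpha> = - (\<beta> * t)" using square by (simp add: eq_neg_iff_add_eq_0)
      have "4 * (\<alpha> * \<alpha> + \<alpha> * \<beta> * t + \<beta> * \<beta>) = (2 * \<alpha>) * (2 * \<alpha>) + 2 * (2 * \<alpha>) * \<beta> * t + 4 * \<beta> * \<beta>"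
        by algebra
      also have "\<dots> = 3 * (\<beta> * \<beta>)" unfolding \<alpha> using tt by algebra
      finally have "(4::'k) = 0" using det three by simp
      moreover have "(4::'k) = 3 + 1" by simp
      ultimately show False using three by simp
    qed
    then have "y = \<one>\<^bsub>PSL2 K\<^esub>"
      using Y PSL2_proj_scalar mat2_scalar_lincomb unfolding Y_eq by blast
    then show ?thesis by simp
  qed (use X PSL2_proj_scalar in blast)
qed

section \<open>Homomorphisms from alternating groups into \<open>PSL\<^sub>2(K)\<close>\<close>

lemma nat_fun_eq_by_values_upto_7:
  fixes f g :: "nat \<Rightarrow> nat"
  assumes "f 0 = g 0" "f 1 = g 1" "f 2 = g 2" "f 3 = g 3" "f 4 = g 4" "f 5 = g 5" "f 6 = g 6" "f 7 = g 7"
    and "\<And>x. x > 7 \<Longrightarrow> f x = g x"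
  shows "f = g"
proof
  fix x show "f x = g x"
  proof (cases "x > 7")
    case False
    then have "x = 0 \<or> x = 1 \<or> x = 2 \<or> x = 3 \<or> x = 4 \<or> x = 5 \<or> x = 6 \<or> x = 7" by linarith
    then show ?thesis using assms(1-8) by fastforce
  qed (use assms(9) in blast)
qed

lemma three_cycle_in_alt_group:
  assumes "distinct [a, b, c]" "{a, b, c} \<subseteq> {1..n}"
  shows "cycle_of_list [a, b, c] \<in> carrier (alt_group n)"
  using assms three_cycles_incl[of n] by (force intro!: exI[of _ "[a, b, c]"])

lemma alt_group_comp_closed:
  "g \<in> carrier (alt_group n) \<Longrightarrow> h \<in> carrier (alt_group n) \<Longrightarrow> g \<circ> h \<in> carrier (alt_group n)"
  using group.subgroupE(4)[OF sym_group_is_group alt_group_is_subgroup]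
  by (simp add: sym_group_mult)

lemma double_transposition_in_alt_group:
  assumes "a \<noteq> b" "c \<noteq> d" "{a, b, c, d} \<subseteq> {1..n}"
  shows "transpose a b \<circ> transpose c d \<in> carrier (alt_group n)"
proof -
  have "transpose a b \<circ> transpose c d permutes {1..n}"
    using assms by (intro permutes_compose permutes_swap_id) auto
  moreover have "evenperm (transpose a b \<circ> transpose c d)"
    using evenperm_comp[OF permutation_swap_id permutation_swap_id, of a b c d] assms(1,2)
    by (simp add: evenperm_swap)
  ultimately show ?thesis by (simp add: alt_group_carrier)
qed

lemma alt_group_triple_transitive:
  assumes n: "n \<ge> 5"
    and abc: "distinct [a, b, c]" "{a, b, c} \<subseteq> {1..n}"
    and xyz: "distinct [x, y, z]" "{x, y, z} \<subseteq> {1..n}"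
  obtains q where "q \<in> carrier (alt_group n)" "q a = x" "q b = y" "q c = z"
proof -
  define p where "p = transpose (transpose (transpose a x b) y (transpose a x c)) z
    \<circ> transpose (transpose a x b) y \<circ> transpose a x"
  have p_permutes: "p permutes {1..n}"
    unfolding p_def using abc xyz
    by (intro permutes_compose permutes_swap_id) (auto simp: transpose_def)
  have p_values: "p a = x" "p b = y" "p c = z"
    using abc xyz by (auto simp: p_def transpose_def)
  show ?thesis
  proof (cases "evenperm p")
    case True
    then show ?thesis using that p_permutes p_values by (simp add: alt_group_carrier)
  next
    case False
    have "card {x, y, z} = 3" using xyz(1) by simp
    then have "card ({1..n} - {x, y, z}) = n - 3"
      using xyz(2) by (simp add: card_Diff_subset)
    then have "2 \<le> card ({1..n} - {x, y, z})" using n by simp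
    then obtain S where S: "S \<subseteq> {1..n} - {x, y, z}" "card S = 2"
      by (rule obtain_subset_with_card_n)
    from S(2) obtain u w where "S = {u, w}" "u \<noteq> w" by (auto simp: card_2_iff)
    with S(1) have uw: "u \<noteq> w" "{u, w} \<subseteq> {1..n} - {x, y, z}" by auto
    have "transpose u w \<circ> p permutes {1..n}"
      using uw p_permutes by (intro permutes_compose permutes_swap_id) auto
    moreover have "permutation p" using p_permutes by (auto simp: permutation_permutes)
    then have "evenperm (transpose u w \<circ> p)"
      using evenperm_comp[OF permutation_swap_id, of p u w] False uw(1) by (simp add: evenperm_swap)
    ultimately show ?thesis
      using that[of "transpose u w \<circ> p"] p_values uw by (auto simp: alt_group_carrier)
  qed
qed

text \<open>The kernel is normal, all 3-cycles are conjugate in \<open>A\<^sub>n\<close>, and they generate \<open>A\<^sub>n\<close>.\<close>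
lemma alt_group_hom_trivial_if_kills_3cycle:
  assumes H: "group H" and hom: "\<rho> \<in> hom (alt_group n) H" and n: "n \<ge> 5"
    and abc: "distinct [a, b, c]" "{a, b, c} \<subseteq> {1..n}"
    and kill: "\<rho> (cycle_of_list [a, b, c]) = \<one>\<^bsub>H\<^esub>"
  shows "\<forall>\<sigma> \<in> carrier (alt_group n). \<rho> \<sigma> = \<one>\<^bsub>H\<^esub>"
proof -
  interpret group_hom "alt_group n" H \<rho>
    using H hom alt_group_is_group by (simp add: group_hom_def group_hom_axioms_def)
  let ?N = "kernel (alt_group n) H \<rho>"
  have abc_N: "cycle_of_list [a, b, c] \<in> ?N"
    using kill three_cycle_in_alt_group[OF abc] by (simp add: kernel_def)
  have "three_cycles n \<subseteq> ?N"
  proof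
    fix p assume "p \<in> three_cycles n"
    then obtain cs where cs: "p = cycle_of_list cs" "cycle cs" "length cs = 3" "set cs \<subseteq> {1..n}"
      by auto
    then obtain x y z where xyz: "cs = [x, y, z]" using stupid_lemma by blast
    obtain q where q: "q \<in> carrier (alt_group n)" "q a = x" "q b = y" "q c = z"
      using alt_group_triple_transitive[OF n abc, of x y z] cs xyz by auto
    have "bij q" using q(1) permutes_bij by (auto simp: alt_group_carrier)
    then have "q \<circ> cycle_of_list [a, b, c] \<circ> inv' q = p"
      using conjugation_of_cycle[of "[a, b, c]" q] abc q cs xyz by simp
    moreover have "q \<otimes>\<^bsub>alt_group n\<^esub> cycle_of_list [a, b, c] \<otimes>\<^bsub>alt_group n\<^esub> inv\<^bsub>alt_group n\<^esub> q \<in> ?N"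
      using normal.inv_op_closed2[OF normal_kernel q(1) abc_N] .
    ultimately show "p \<in> ?N" using alt_group_inv_equality[OF q(1)] by (simp add: alt_group_mult)
  qed
  then have "generate (alt_group n) (three_cycles n) \<subseteq> ?N"
    by (intro G.generate_subgroup_incl subgroup_kernel)
  then show ?thesis using alt_group_carrier_as_three_cycles[of n] by (auto simp: kernel_def)
qed

text \<open>\<open>(1 4)(2 5)(3 5)(3 6)\<close> conjugates \<open>(4 5 6)(1 2 3)\<close> to \<open>(4 5 6)(1 3 2)\<close>, and the product
  of these two is the 3-cycle \<open>(4 6 5)\<close>.\<close>
lemma alt_group_hom_trivial_if_kills_double_3cycle:
  assumes H: "group H" and hom: "\<rho> \<in> hom (alt_group n) H" and n: "n \<ge> 6"
    and kill: "\<rho> (cycle_of_list [4, 5, 6] \<circ> cycle_of_list [1, 2, 3]) = \<one>\<^bsub>H\<^esub> \<or>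
      \<rho> (cycle_of_list [4, 5, 6] \<circ> cycle_of_list [1, 3, 2]) = \<one>\<^bsub>H\<^esub>"
  shows "\<forall>\<sigma> \<in> carrier (alt_group n). \<rho> \<sigma> = \<one>\<^bsub>H\<^esub>"
proof -
  interpret group_hom "alt_group n" H \<rho>
    using H hom alt_group_is_group by (simp add: group_hom_def group_hom_axioms_def)
  define h1 h2 g :: "nat \<Rightarrow> nat" where
    "h1 = cycle_of_list [4, 5, 6] \<circ> cycle_of_list [1, 2, 3]" and
    "h2 = cycle_of_list [4, 5, 6] \<circ> cycle_of_list [1, 3, 2]" and
    "g = (transpose 1 4 \<circ> transpose 2 5) \<circ> (transpose 3 5 \<circ> transpose 3 6)"
  have carrier: "h1 \<in> carrier (alt_group n)" "h2 \<in> carrier (alt_group n)" "g \<in> carrier (alt_group n)"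
    using n unfolding h1_def h2_def g_def
    by (intro alt_group_comp_closed three_cycle_in_alt_group double_transposition_in_alt_group; simp)+
  have "g \<otimes>\<^bsub>alt_group n\<^esub> h1 = h2 \<otimes>\<^bsub>alt_group n\<^esub> g"
    unfolding alt_group_mult h1_def h2_def g_def
    by (rule nat_fun_eq_by_values_upto_7) (simp_all add: transpose_def)
  then have conj: "\<rho> g \<otimes>\<^bsub>H\<^esub> \<rho> h1 = \<rho> h2 \<otimes>\<^bsub>H\<^esub> \<rho> g"
    using carrier by (simp flip: hom_mult)
  have "\<rho> h1 = \<one>\<^bsub>H\<^esub> \<and> \<rho> h2 = \<one>\<^bsub>H\<^esub>"
    using kill conj carrier unfolding h1_def[symmetric] h2_def[symmetric]
    by (metis H.l_cancel_one H.r_cancel_one' H.l_one H.r_one hom_closed)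
  moreover have "h1 \<otimes>\<^bsub>alt_group n\<^esub> h2 = cycle_of_list [4, 6, 5]"
    unfolding alt_group_mult h1_def h2_def
    by (rule nat_fun_eq_by_values_upto_7) (simp_all add: transpose_def)
  ultimately have "\<rho> (cycle_of_list [4, 6, 5]) = \<one>\<^bsub>H\<^esub>"
    using carrier by (metis hom_mult H.l_one H.one_closed)
  then show ?thesis
    using n by (intro alt_group_hom_trivial_if_kills_3cycle[OF H hom, of 4 6 5]) auto
qed

lemma alt_group_hom_PSL2_trivial_char_not_3:
  fixes K :: "'k::field itself"
  assumes three: "(3::'k) \<noteq> 0" and hom: "\<rho> \<in> hom (alt_group n) (PSL2 K)" and n: "n \<ge> 6"
  shows "\<forall>\<sigma> \<in> carrier (alt_group n). \<rho> \<sigma> = \<one>\<^bsub>PSL2 K\<^esub>"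
proof -
  interpret group_hom "alt_group n" "PSL2 K" \<rho>
    using hom alt_group_is_group PSL2_group by (simp add: group_hom_def group_hom_axioms_def)
  note kill_3cycle = alt_group_hom_trivial_if_kills_3cycle[OF PSL2_group hom]
  note kill_double = alt_group_hom_trivial_if_kills_double_3cycle[OF PSL2_group hom n]
  define x y where "x = cycle_of_list [1, 2, 3 :: nat]" and "y = cycle_of_list [4, 5, 6 :: nat]"
  have carrier: "x \<in> carrier (alt_group n)" "y \<in> carrier (alt_group n)"
    using n unfolding x_def y_def by (intro three_cycle_in_alt_group; simp)+
  have rel: "x \<otimes>\<^bsub>alt_group n\<^esub> (x \<otimes>\<^bsub>alt_group n\<^esub> x) = \<one>\<^bsub>alt_group n\<^esub>"
    "y \<otimes>\<^bsub>alt_group n\<^esub> (y \<otimes>\<^bsub>alt_group n\<^esub> y) = \<one>\<^bsub>alt_group n\<^esub>"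
    "x \<otimes>\<^bsub>alt_group n\<^esub> y = y \<otimes>\<^bsub>alt_group n\<^esub> x"
    by (simp_all add: x_def y_def alt_group_mult alt_group_one fun_eq_iff transpose_def)
  then have x3: "\<rho> x \<otimes>\<^bsub>PSL2 K\<^esub> (\<rho> x \<otimes>\<^bsub>PSL2 K\<^esub> \<rho> x) = \<one>\<^bsub>PSL2 K\<^esub>"
    using carrier by (simp flip: hom_mult)
  have "\<rho> x = \<one>\<^bsub>PSL2 K\<^esub> \<or> \<rho> y = \<one>\<^bsub>PSL2 K\<^esub> \<or> \<rho> y = \<rho> x \<or> \<rho> y = \<rho> x \<otimes>\<^bsub>PSL2 K\<^esub> \<rho> x"
    using rel carrier x3 by (intro PSL2_commuting_order3[OF three]) (simp_all flip: hom_mult)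
  then consider "\<rho> x = \<one>\<^bsub>PSL2 K\<^esub>" | "\<rho> y = \<one>\<^bsub>PSL2 K\<^esub>"
    | "\<rho> (y \<otimes>\<^bsub>alt_group n\<^esub> (x \<otimes>\<^bsub>alt_group n\<^esub> x)) = \<one>\<^bsub>PSL2 K\<^esub>"
    | "\<rho> (y \<otimes>\<^bsub>alt_group n\<^esub> x) = \<one>\<^bsub>PSL2 K\<^esub>"
    using carrier x3 by (auto simp: H.m_assoc)
  then show ?thesis
  proof cases
    case 1
    with n show ?thesis unfolding x_def by (intro kill_3cycle) auto
  next
    case 2
    with n show ?thesis unfolding y_def by (intro kill_3cycle) auto
  next
    case 3
    have "y \<otimes>\<^bsub>alt_group n\<^esub> (x \<otimes>\<^bsub>alt_group n\<^esub> x) = cycle_of_list [4, 5, 6] \<circ> cycle_of_list [1, 3, 2]"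
      unfolding x_def y_def alt_group_mult
      by (rule nat_fun_eq_by_values_upto_7) (simp_all add: transpose_def)
    with 3 show ?thesis by (intro kill_double disjI2) simp
  next
    case 4
    then show ?thesis by (intro kill_double disjI1) (simp add: x_def y_def alt_group_mult)
  qed
qed

text \<open>Both \<open>(1 2 3)\<close> and \<open>(1 2 7)\<close> commute with an involution; the product of the two involutions
  is the 3-cycle \<open>(3 7 6)\<close>.\<close>
lemma alt_group_hom_PSL2_trivial_char_3:
  fixes K :: "'k::field itself"
  assumes three: "(3::'k) = 0" and hom: "\<rho> \<in> hom (alt_group n) (PSL2 K)" and n: "n \<ge> 7"
  shows "\<forall>\<sigma> \<in> carrier (alt_group n). \<rho> \<sigma> = \<one>\<^bsub>PSL2 K\<^esub>"
proof -
  interpret group_hom "alt_group n" "PSL2 K" \<rho>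
    using hom alt_group_is_group PSL2_group by (simp add: group_hom_def group_hom_axioms_def)
  note kill_3cycle = alt_group_hom_trivial_if_kills_3cycle[OF PSL2_group hom]
  have kill_3cycle_or_involution:
    "\<rho> x = \<one>\<^bsub>PSL2 K\<^esub> \<or> \<rho> t = \<one>\<^bsub>PSL2 K\<^esub>"
    if "x \<in> carrier (alt_group n)" "t \<in> carrier (alt_group n)"
      "x \<otimes>\<^bsub>alt_group n\<^esub> (x \<otimes>\<^bsub>alt_group n\<^esub> x) = \<one>\<^bsub>alt_group n\<^esub>"
      "t \<otimes>\<^bsub>alt_group n\<^esub> t = \<one>\<^bsub>alt_group n\<^esub>"
      "x \<otimes>\<^bsub>alt_group n\<^esub> t = t \<otimes>\<^bsub>alt_group n\<^esub> x" for x t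
    using that by (intro PSL2_char3_commuting_order_2_3[OF three]) (simp_all flip: hom_mult)
  define t1 t2 :: "nat \<Rightarrow> nat"
    where "t1 = transpose 4 5 \<circ> transpose 6 7" and "t2 = transpose 4 5 \<circ> transpose 3 6"
  have t_carrier: "t1 \<in> carrier (alt_group n)" "t2 \<in> carrier (alt_group n)"
    using n unfolding t1_def t2_def by (intro double_transposition_in_alt_group; simp)+
  have "\<rho> (cycle_of_list [1, 2, 3]) = \<one>\<^bsub>PSL2 K\<^esub> \<or> \<rho> t1 = \<one>\<^bsub>PSL2 K\<^esub>"
    using n t_carrier unfolding t1_def
    by (intro kill_3cycle_or_involution three_cycle_in_alt_group)
      (simp_all add: alt_group_mult alt_group_one fun_eq_iff transpose_def)
  moreover have "\<rho> (cycle_of_list [1, 2, 7]) = \<one>\<^bsub>PSL2 K\<^esub> \<or> \<rho> t2 = \<one>\<^bsub>PSL2 K\<^esub>"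
    using n t_carrier unfolding t2_def
    by (intro kill_3cycle_or_involution three_cycle_in_alt_group)
      (simp_all add: alt_group_mult alt_group_one fun_eq_iff transpose_def)
  moreover have "\<rho> (cycle_of_list [3, 7, 6]) = \<one>\<^bsub>PSL2 K\<^esub>" if "\<rho> t1 = \<one>\<^bsub>PSL2 K\<^esub>" "\<rho> t2 = \<one>\<^bsub>PSL2 K\<^esub>"
  proof -
    have "t1 \<otimes>\<^bsub>alt_group n\<^esub> t2 = cycle_of_list [3, 7, 6]"
      unfolding t1_def t2_def alt_group_mult
      by (rule nat_fun_eq_by_values_upto_7) (simp_all add: transpose_def)
    then show ?thesis using that t_carrier by (metis hom_mult H.l_one H.one_closed)
  qed
  ultimately consider "\<rho> (cycle_of_list [1, 2, 3]) = \<one>\<^bsub>PSL2 K\<^esub>"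
    | "\<rho> (cycle_of_list [1, 2, 7]) = \<one>\<^bsub>PSL2 K\<^esub>" | "\<rho> (cycle_of_list [3, 7, 6]) = \<one>\<^bsub>PSL2 K\<^esub>"
    by blast
  then show ?thesis
    by cases (use n in \<open>intro kill_3cycle; auto\<close>)+
qed

section \<open>The Clifford algebra of \<open>\<real>\<^sup>n\<close>\<close>

text \<open>A constant rather than the abbreviation \<open>sym_diff\<close>, so that the simplifier can rewrite with it.\<close>
definition symdiff :: "nat set \<Rightarrow> nat set \<Rightarrow> nat set" where
  "symdiff A B = (A - B) \<union> (B - A)"

lemma symdiff_simps [simp]:
  "symdiff {} A = A" "symdiff A {} = A" "symdiff A A = {}" "symdiff A (symdiff A B) = B" "symdiff (symdiff A B) B = A"
  "symdiff A B = {} \<longleftrightarrow> A = B" "finite A \<Longrightarrow> finite B \<Longrightarrow> finite (symdiff A B)"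
  by (auto simp: symdiff_def)

lemma symdiff_commute: "symdiff A B = symdiff B A"
  by (auto simp: symdiff_def)

lemma symdiff_assoc: "symdiff (symdiff A B) C = symdiff A (symdiff B C)"
  by (auto simp: symdiff_def)

lemma symdiff_subset: "A \<subseteq> X \<Longrightarrow> B \<subseteq> X \<Longrightarrow> symdiff A B \<subseteq> X"
  by (auto simp: symdiff_def)

lemma odd_card_symdiff:
  assumes "finite A" "finite B"
  shows "odd (card (symdiff A B)) \<longleftrightarrow> odd (card A) \<noteq> odd (card B)"
proof -
  have "card (symdiff A B) = card (A - B) + card (B - A)"
    unfolding symdiff_def using assms by (intro card_Un_disjoint) auto
  moreover have "card A = card (A \<inter> B) + card (A - B)" "card B = card (A \<inter> B) + card (B - A)"
    using assms card_Int_Diff[of A B] card_Int_Diff[of B A] by (simp_all add: Int_commute)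
  ultimately show ?thesis by presburger
qed

lemma prod_symdiff:
  fixes f :: "nat \<Rightarrow> real"
  assumes "finite A" "finite B" "\<And>x. f x * f x = 1"
  shows "prod f (symdiff A B) = prod f A * prod f B"
proof -
  have "prod f (A \<inter> B) * prod f (A \<inter> B) = 1"
    using assms(3) by (simp flip: prod.distrib)
  moreover have "prod f (symdiff A B) = prod f (A - B) * prod f (B - A)"
    unfolding symdiff_def using assms(1,2) by (intro prod.union_disjoint) auto
  moreover have "prod f A * prod f B = (prod f (A \<inter> B) * prod f (A \<inter> B)) * (prod f (A - B) * prod f (B - A))"
    using prod.Int_Diff[OF assms(1), of f B] prod.Int_Diff[OF assms(2), of f A]
    by (simp add: Int_commute mult_ac)
  ultimately show ?thesis by simp
qed

text \<open>An element of the Clifford algebra generated by \<open>e\<^sub>1, \<dots>, e\<^sub>n\<close> with \<open>e\<^sub>i\<^sup>2 = 1\<close> and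
  \<open>e\<^sub>i e\<^sub>j = - e\<^sub>j e\<^sub>i\<close> is stored as its coefficient function on the monomials
  \<open>e\<^sub>S = e\<^sub>s\<^sub>1 \<cdots> e\<^sub>s\<^sub>k\<close> (\<open>s\<^sub>1 < \<dots> < s\<^sub>k\<close>, \<open>S \<subseteq> {1..n}\<close>).
  Then \<open>e\<^sub>S e\<^sub>T = reorder_sign S T \<cdot> e\<^bsub>symdiff S T\<^esub>\<close>: sorting the word costs one sign for every pair
  \<open>s \<in> S\<close>, \<open>t \<in> T\<close> with \<open>t < s\<close>, and the squares \<open>e\<^sub>i\<^sup>2\<close> for \<open>i \<in> S \<inter> T\<close> cancel.\<close>
type_synonym clifford = "nat set \<Rightarrow> real"

definition swap_sign :: "nat \<Rightarrow> nat \<Rightarrow> real" where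
  "swap_sign a b = (if b < a then -1 else 1)"

definition reorder_sign :: "nat set \<Rightarrow> nat set \<Rightarrow> real" where
  "reorder_sign A B = (\<Prod>a\<in>A. \<Prod>b\<in>B. swap_sign a b)"

definition cl_mult :: "nat \<Rightarrow> clifford \<Rightarrow> clifford \<Rightarrow> clifford" where
  "cl_mult n x y = (\<lambda>T. if T \<subseteq> {1..n}
     then \<Sum>S\<in>Pow {1..n}. x S * y (symdiff S T) * reorder_sign S (symdiff S T) else 0)"

definition cl_one :: clifford where
  "cl_one = (\<lambda>S. of_bool (S = {}))"

definition cl_gen :: "nat \<Rightarrow> clifford" where
  "cl_gen i = (\<lambda>S. of_bool (S = {i}))"

definition cl_scale :: "real \<Rightarrow> clifford \<Rightarrow> clifford" where
  "cl_scale c x = (\<lambda>S. c * x S)"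

definition cl_add :: "clifford \<Rightarrow> clifford \<Rightarrow> clifford" where
  "cl_add x y = (\<lambda>S. x S + y S)"

definition cl_supported :: "nat \<Rightarrow> clifford \<Rightarrow> bool" where
  "cl_supported n x \<longleftrightarrow> (\<forall>S. \<not> S \<subseteq> {1..n} \<longrightarrow> x S = 0)"

definition cl_parity :: "bool \<Rightarrow> clifford \<Rightarrow> bool" where
  "cl_parity p x \<longleftrightarrow> (\<forall>S. x S \<noteq> 0 \<longrightarrow> odd (card S) = p)"

lemma swap_sign_simps [simp]: "swap_sign a b * swap_sign a b = 1" "swap_sign a a = 1"
  by (simp_all add: swap_sign_def)

lemma reorder_sign_simps [simp]:
  "reorder_sign A B * reorder_sign A B = 1" "reorder_sign {} B = 1" "reorder_sign A {} = 1"
  by (simp_all add: reorder_sign_def flip: prod.distrib)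

lemma reorder_sign_symdiff_left:
  "finite A \<Longrightarrow> finite A' \<Longrightarrow> reorder_sign (symdiff A A') B = reorder_sign A B * reorder_sign A' B"
  unfolding reorder_sign_def by (rule prod_symdiff) (simp_all flip: prod.distrib)

lemma reorder_sign_symdiff_right:
  "finite B \<Longrightarrow> finite B' \<Longrightarrow> reorder_sign A (symdiff B B') = reorder_sign A B * reorder_sign A B'"
  unfolding reorder_sign_def by (simp add: prod_symdiff flip: prod.distrib)

lemma reorder_sign_singletons: "reorder_sign {i} {j} = swap_sign i j"
  by (simp add: reorder_sign_def)

lemma cl_mult_assoc: "cl_mult n (cl_mult n x y) z = cl_mult n x (cl_mult n y z)"
proof
  fix U
  let ?P = "Pow {1..n}" and ?\<epsilon> = reorder_sign
  show "cl_mult n (cl_mult n x y) z U = cl_mult n x (cl_mult n y z) U"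
  proof (cases "U \<subseteq> {1..n}")
    case U: True
    have "cl_mult n (cl_mult n x y) z U =
        (\<Sum>T\<in>?P. \<Sum>S\<in>?P. x S * y (symdiff S T) * ?\<epsilon> S (symdiff S T) * z (symdiff T U) * ?\<epsilon> T (symdiff T U))"
      using U by (simp add: cl_mult_def sum_distrib_right)
    also have "\<dots> =
        (\<Sum>S\<in>?P. \<Sum>T\<in>?P. x S * y (symdiff S T) * ?\<epsilon> S (symdiff S T) * z (symdiff T U) * ?\<epsilon> T (symdiff T U))"
      by (rule sum.swap)
    also have "\<dots> = (\<Sum>S\<in>?P. \<Sum>R\<in>?P.
        x S * y R * ?\<epsilon> S R * z (symdiff (symdiff S R) U) * ?\<epsilon> (symdiff S R) (symdiff (symdiff S R) U))"
    proof (rule sum.cong[OF refl])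
      fix S assume "S \<in> ?P"
      then show "(\<Sum>T\<in>?P. x S * y (symdiff S T) * ?\<epsilon> S (symdiff S T) * z (symdiff T U) * ?\<epsilon> T (symdiff T U)) =
          (\<Sum>R\<in>?P. x S * y R * ?\<epsilon> S R * z (symdiff (symdiff S R) U) * ?\<epsilon> (symdiff S R) (symdiff (symdiff S R) U))"
        by (intro sum.reindex_bij_witness[of _ "symdiff S" "symdiff S"]) (auto simp: symdiff_subset)
    qed
    also have "\<dots> = (\<Sum>S\<in>?P. \<Sum>R\<in>?P.
        x S * y R * z (symdiff R (symdiff S U)) * ?\<epsilon> R (symdiff R (symdiff S U)) * ?\<epsilon> S (symdiff S U))"
    proof (intro sum.cong refl)
      fix S R assume "S \<in> ?P" "R \<in> ?P"
      then have "finite S" "finite R" "finite U"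
        using U finite_subset[OF _ finite_atLeastAtMost] by blast+
      then show "x S * y R * ?\<epsilon> S R * z (symdiff (symdiff S R) U) * ?\<epsilon> (symdiff S R) (symdiff (symdiff S R) U) =
          x S * y R * z (symdiff R (symdiff S U)) * ?\<epsilon> R (symdiff R (symdiff S U)) * ?\<epsilon> S (symdiff S U)"
        by (simp add: symdiff_assoc symdiff_commute[of S R] reorder_sign_symdiff_left
            reorder_sign_symdiff_right mult_ac)
    qed
    also have "\<dots> = cl_mult n x (cl_mult n y z) U"
      using U by (auto simp: cl_mult_def symdiff_subset sum_distrib_left sum_distrib_right mult_ac
          intro!: sum.cong)
    finally show ?thesis .
  qed (simp add: cl_mult_def)
qed

lemma cl_supported_simps [simp]:
  "cl_supported n (cl_mult n x y)" "cl_supported n cl_one" "i \<in> {1..n} \<Longrightarrow> cl_supported n (cl_gen i)"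
  "cl_supported n x \<Longrightarrow> cl_supported n (cl_scale c x)"
  "cl_supported n x \<Longrightarrow> cl_supported n y \<Longrightarrow> cl_supported n (cl_add x y)"
  by (auto simp: cl_supported_def cl_mult_def cl_one_def cl_gen_def cl_scale_def cl_add_def)

lemma cl_mult_one_left: "cl_supported n x \<Longrightarrow> cl_mult n cl_one x = x"
  by (auto simp: fun_eq_iff cl_mult_def cl_one_def cl_supported_def mult.assoc)

lemma cl_mult_right_expansion:
  assumes "T \<subseteq> {1..n}"
  shows "cl_mult n x y T = (\<Sum>R\<in>Pow {1..n}. y R * (x (symdiff R T) * reorder_sign (symdiff R T) R))"
  unfolding cl_mult_def using assms
  by (auto intro!: sum.reindex_bij_witness[of _ "\<lambda>R. symdiff R T" "\<lambda>S. symdiff S T"]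
      simp: symdiff_commute[of T] ac_simps) (auto simp: symdiff_def)

lemma cl_mult_one_right:
  assumes "cl_supported n x"
  shows "cl_mult n x cl_one = x"
proof
  fix T show "cl_mult n x cl_one T = x T"
    using assms by (cases "T \<subseteq> {1..n}")
      (simp_all add: cl_mult_right_expansion cl_one_def, simp add: cl_mult_def cl_supported_def)
qed

lemma cl_mult_gen_left:
  "i \<in> {1..n} \<Longrightarrow> T \<subseteq> {1..n} \<Longrightarrow>
     cl_mult n (cl_gen i) y T = y (symdiff {i} T) * reorder_sign {i} (symdiff {i} T)"
  by (simp add: cl_mult_def cl_gen_def mult.assoc)

lemma cl_mult_gen_right:
  "i \<in> {1..n} \<Longrightarrow> T \<subseteq> {1..n} \<Longrightarrow>
     cl_mult n x (cl_gen i) T = x (symdiff {i} T) * reorder_sign (symdiff {i} T) {i}"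
  by (simp add: cl_mult_right_expansion cl_gen_def)

lemma cl_mult_gen_gen:
  assumes "i \<in> {1..n}" "j \<in> {1..n}"
  shows "cl_mult n (cl_gen i) (cl_gen j) = (\<lambda>T. of_bool (T = symdiff {i} {j}) * swap_sign i j)"
proof
  fix T
  have eq: "symdiff {i} T = {j} \<longleftrightarrow> T = symdiff {i} {j}" by (auto simp: symdiff_def)
  show "cl_mult n (cl_gen i) (cl_gen j) T = of_bool (T = symdiff {i} {j}) * swap_sign i j"
  proof (cases "T \<subseteq> {1..n}")
    case True
    then show ?thesis
      using cl_mult_gen_left[OF assms(1) True, of "cl_gen j"] eq
      by (auto simp: cl_gen_def reorder_sign_singletons)
  next
    case False
    moreover have "symdiff {i} {j} \<subseteq> {1..n}" using assms by (auto simp: symdiff_def)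
    ultimately show ?thesis by (auto simp: cl_mult_def)
  qed
qed

lemma cl_mult_add_left: "cl_mult n (cl_add x y) z = cl_add (cl_mult n x z) (cl_mult n y z)"
  and cl_mult_add_right: "cl_mult n z (cl_add x y) = cl_add (cl_mult n z x) (cl_mult n z y)"
  and cl_mult_scale_left: "cl_mult n (cl_scale c x) y = cl_scale c (cl_mult n x y)"
  and cl_mult_scale_right: "cl_mult n x (cl_scale c y) = cl_scale c (cl_mult n x y)"
  by (auto simp: cl_mult_def cl_add_def cl_scale_def algebra_simps sum.distrib sum_distrib_left)

lemmas cl_mult_linear = cl_mult_add_left cl_mult_add_right cl_mult_scale_left cl_mult_scale_right

lemma cl_scale_simps [simp]: "cl_scale a (cl_scale b x) = cl_scale (a * b) x" "cl_scale 1 x = x"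
  by (simp_all add: cl_scale_def mult_ac)

lemma cl_gen_square: "i \<in> {1..n} \<Longrightarrow> cl_mult n (cl_gen i) (cl_gen i) = cl_one"
  by (simp add: cl_mult_gen_gen cl_one_def)

lemma cl_gen_anticommute:
  "i \<in> {1..n} \<Longrightarrow> j \<in> {1..n} \<Longrightarrow> i \<noteq> j \<Longrightarrow>
     cl_mult n (cl_gen i) (cl_gen j) = cl_scale (-1) (cl_mult n (cl_gen j) (cl_gen i))"
  by (auto simp: cl_mult_gen_gen cl_scale_def swap_sign_def symdiff_commute fun_eq_iff)

definition cl_root :: "nat \<Rightarrow> nat \<Rightarrow> clifford" where
  "cl_root a b = cl_add (cl_gen a) (cl_scale (-1) (cl_gen b))"

lemma cl_supported_root: "a \<in> {1..n} \<Longrightarrow> b \<in> {1..n} \<Longrightarrow> cl_supported n (cl_root a b)"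
  by (simp add: cl_root_def)

lemma cl_root_mult_gen:
  assumes ab: "a \<noteq> b" "a \<in> {1..n}" "b \<in> {1..n}" and i: "i \<in> {1..n}"
  shows "cl_mult n (cl_root a b) (cl_gen i) = cl_scale (-1) (cl_mult n (cl_gen (transpose a b i)) (cl_root a b))"
proof -
  consider "i = a" | "i = b" | "i \<noteq> a" "i \<noteq> b" by blast
  then show ?thesis
  proof cases
    case 3
    then have "cl_mult n (cl_gen a) (cl_gen i) = cl_scale (-1) (cl_mult n (cl_gen i) (cl_gen a))"
      "cl_mult n (cl_gen b) (cl_gen i) = cl_scale (-1) (cl_mult n (cl_gen i) (cl_gen b))"
      using cl_gen_anticommute ab i by metis+
    with 3 show ?thesis
      unfolding cl_root_def cl_mult_linear by (simp add: fun_eq_iff cl_add_def cl_scale_def)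
  qed (use ab in \<open>unfold cl_root_def cl_mult_linear,
      simp_all add: cl_gen_square fun_eq_iff cl_add_def cl_scale_def\<close>)
qed

lemma cl_root_square:
  assumes "a \<noteq> b" "a \<in> {1..n}" "b \<in> {1..n}"
  shows "cl_mult n (cl_root a b) (cl_root a b) = cl_scale 2 cl_one"
  using assms cl_gen_anticommute[of a n b] unfolding cl_root_def cl_mult_linear
  by (simp add: cl_gen_square fun_eq_iff cl_add_def cl_scale_def)

lemma cl_root_anticommute:
  assumes "{a, b, c, d} \<subseteq> {1..n}" "c \<notin> {a, b}" "d \<notin> {a, b}"
  shows "cl_mult n (cl_root c d) (cl_root a b) = cl_scale (-1) (cl_mult n (cl_root a b) (cl_root c d))"
proof -
  have "cl_mult n (cl_gen x) (cl_gen y) = cl_scale (-1) (cl_mult n (cl_gen y) (cl_gen x))"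
    if "x \<in> {c, d}" "y \<in> {a, b}" for x y
    using that assms cl_gen_anticommute[of x n y] by auto
  then show ?thesis
    unfolding cl_root_def cl_mult_linear by (simp add: fun_eq_iff cl_add_def cl_scale_def algebra_simps)
qed

lemma cl_parity_mult:
  assumes "cl_parity p x" "cl_parity q y"
  shows "cl_parity (p \<noteq> q) (cl_mult n x y)"
  unfolding cl_parity_def
proof (intro allI impI)
  fix T assume nonzero: "cl_mult n x y T \<noteq> 0"
  then have T: "T \<subseteq> {1..n}" by (auto simp: cl_mult_def split: if_splits)
  with nonzero have "(\<Sum>S\<in>Pow {1..n}. x S * y (symdiff S T) * reorder_sign S (symdiff S T)) \<noteq> 0"
    by (simp add: cl_mult_def)
  then obtain S where S: "S \<subseteq> {1..n}" "x S \<noteq> 0" "y (symdiff S T) \<noteq> 0"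
    by (metis (no_types, lifting) PowD mult_eq_0_iff sum.neutral)
  then have "odd (card S) = p" "odd (card (symdiff S T)) = q"
    using assms by (auto simp: cl_parity_def)
  moreover have "finite S" "finite T" using S(1) T finite_subset by auto
  ultimately show "odd (card T) = (p \<noteq> q)" using odd_card_symdiff[of S T] by auto
qed

lemma cl_parity_simps [simp]:
  "cl_parity True (cl_gen i)" "cl_parity False cl_one" "cl_parity p x \<Longrightarrow> cl_parity p (cl_scale c x)"
  by (auto simp: cl_parity_def cl_gen_def cl_one_def cl_scale_def)

lemma cl_parity_add [simp]: "cl_parity p x \<Longrightarrow> cl_parity p y \<Longrightarrow> cl_parity p (cl_add x y)"
  unfolding cl_parity_def cl_add_def by (metis add.right_neutral add_0)

lemma cl_parity_root: "cl_parity True (cl_root a b)"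
  by (simp add: cl_root_def)

text \<open>For \<open>i \<in> T\<close> with \<open>|T|\<close> even, \<open>e\<^sub>i\<close> anticommutes with \<open>e\<^sub>T\<close>: moving it across the other
  \<open>|T| - 1\<close> factors costs an odd number of signs.\<close>
lemma reorder_sign_anticommute:
  assumes T: "finite T" "i \<in> T" "even (card T)"
  shows "reorder_sign T {i} * reorder_sign {i} T = -1"
proof -
  have "reorder_sign T {i} * reorder_sign {i} T = (\<Prod>a\<in>T. swap_sign a i * swap_sign i a)"
    by (simp add: reorder_sign_def prod.distrib)
  also have "\<dots> = (\<Prod>a\<in>T - {i}. swap_sign a i * swap_sign i a)"
    using T by (simp add: prod.remove)
  also have "\<dots> = (\<Prod>a\<in>T - {i}. -1)"
    by (rule prod.cong) (auto simp: swap_sign_def)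
  also have "\<dots> = -1"
    using T by (cases "card T") auto
  finally show ?thesis .
qed

lemma cl_even_central_eq_scalar:
  assumes supported: "cl_supported n w" and even: "cl_parity False w"
    and central: "\<forall>i\<in>{1..n}. cl_mult n w (cl_gen i) = cl_mult n (cl_gen i) w"
  shows "w = cl_scale (w {}) cl_one"
proof
  fix T show "w T = cl_scale (w {}) cl_one T"
  proof (cases "T = {}")
    case False
    have "w T = 0"
    proof (rule ccontr)
      assume nonzero: "w T \<noteq> 0"
      then have T: "T \<subseteq> {1..n}" "even (card T)"
        using supported even by (auto simp: cl_supported_def cl_parity_def)
      obtain i where i: "i \<in> T" using False by blast
      with T have i_range: "i \<in> {1..n}" and "finite T" by (auto intro: finite_subset)
      define T' where "T' = symdiff {i} T"
      have T': "T' \<subseteq> {1..n}" "symdiff {i} T' = T"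
        unfolding T'_def using T i_range by (auto simp: symdiff_def)
      have "w T * reorder_sign {i} T = w T * reorder_sign T {i}"
        using central i_range cl_mult_gen_right[OF i_range T'(1), of w] cl_mult_gen_left[OF i_range T'(1), of w]
        by (simp add: T')
      then have "reorder_sign T {i} * reorder_sign {i} T = 1"
        using nonzero reorder_sign_simps(1)[of T "{i}"] by simp
      with reorder_sign_anticommute[OF \<open>finite T\<close> i T(2)] show False by simp
    qed
    with False show ?thesis by (simp add: cl_scale_def cl_one_def)
  qed (simp add: cl_scale_def cl_one_def)
qed

section \<open>Lifting even permutations to the Clifford algebra\<close>

definition cl_lifts :: "nat \<Rightarrow> (nat \<Rightarrow> nat) \<Rightarrow> clifford set" where
  "cl_lifts n g = {u. cl_supported n u \<and> cl_parity False u \<and>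
     (\<exists>v. cl_supported n v \<and> cl_parity False v \<and> cl_mult n u v = cl_one \<and> cl_mult n v u = cl_one) \<and>
     (\<forall>i\<in>{1..n}. cl_mult n u (cl_gen i) = cl_mult n (cl_gen (g i)) u)}"

lemma cl_one_in_lifts: "cl_one \<in> cl_lifts n id"
  by (auto simp: cl_lifts_def cl_mult_one_left cl_mult_one_right intro!: exI[of _ cl_one])

lemma cl_root_pair_in_lifts:
  assumes pq: "p \<noteq> q" "p \<in> {1..n}" "q \<in> {1..n}" and rs: "r \<noteq> s" "r \<in> {1..n}" "s \<in> {1..n}"
  shows "cl_mult n (cl_root p q) (cl_root r s) \<in> cl_lifts n (transpose p q \<circ> transpose r s)"
proof -
  let ?u = "cl_mult n (cl_root p q) (cl_root r s)" and ?u' = "cl_mult n (cl_root r s) (cl_root p q)"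
  have inverse: "cl_mult n (cl_mult n (cl_root a b) (cl_root c d)) (cl_mult n (cl_root c d) (cl_root a b)) = cl_scale 4 cl_one"
    if "a \<noteq> b" "a \<in> {1..n}" "b \<in> {1..n}" "c \<noteq> d" "c \<in> {1..n}" "d \<in> {1..n}" for a b c d
    using that by (simp add: cl_mult_assoc cl_root_square cl_mult_linear cl_supported_root cl_mult_one_left
        flip: cl_mult_assoc[of n "cl_root c d" "cl_root c d"])
  have "cl_mult n ?u (cl_gen i) = cl_mult n (cl_gen (transpose p q (transpose r s i))) ?u"
    if i: "i \<in> {1..n}" for i
  proof -
    have j: "transpose r s i \<in> {1..n}" using rs i by (simp add: transpose_def)
    have "cl_mult n ?u (cl_gen i) = cl_scale (-1) (cl_mult n (cl_mult n (cl_root p q) (cl_gen (transpose r s i))) (cl_root r s))"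
      unfolding cl_mult_assoc cl_root_mult_gen[OF rs i] cl_mult_scale_right ..
    also have "\<dots> = cl_mult n (cl_gen (transpose p q (transpose r s i))) ?u"
      unfolding cl_root_mult_gen[OF pq j] cl_mult_scale_left cl_mult_assoc by simp
    finally show ?thesis .
  qed
  moreover have "cl_mult n ?u (cl_scale (1/4) ?u') = cl_one" "cl_mult n (cl_scale (1/4) ?u') ?u = cl_one"
    by (simp_all add: cl_mult_linear inverse[OF pq rs] inverse[OF rs pq])
  moreover have "cl_parity False ?u" "cl_parity False ?u'"
    using cl_parity_mult[OF cl_parity_root cl_parity_root] by simp_all
  ultimately show ?thesis
    unfolding cl_lifts_def by (auto intro!: exI[of _ "cl_scale (1/4) ?u'"])
qed

lemma cl_liftsE:
  assumes "u \<in> cl_lifts n g"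
  obtains v where "cl_supported n u" "cl_parity False u" "cl_supported n v" "cl_parity False v"
    "cl_mult n u v = cl_one" "cl_mult n v u = cl_one"
    "\<forall>i\<in>{1..n}. cl_mult n u (cl_gen i) = cl_mult n (cl_gen (g i)) u"
  using assms unfolding cl_lifts_def by blast

lemma cl_lifts_mult:
  assumes u: "u \<in> cl_lifts n g" and u': "u' \<in> cl_lifts n h" and h: "h ` {1..n} \<subseteq> {1..n}"
  shows "cl_mult n u u' \<in> cl_lifts n (g \<circ> h)"
proof -
  obtain v where v: "cl_supported n u" "cl_parity False u" "cl_supported n v" "cl_parity False v"
    "cl_mult n u v = cl_one" "cl_mult n v u = cl_one"
    and conj: "\<forall>i\<in>{1..n}. cl_mult n u (cl_gen i) = cl_mult n (cl_gen (g i)) u"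
    using u by (rule cl_liftsE)
  obtain v' where v': "cl_supported n u'" "cl_parity False u'" "cl_supported n v'" "cl_parity False v'"
    "cl_mult n u' v' = cl_one" "cl_mult n v' u' = cl_one"
    and conj': "\<forall>i\<in>{1..n}. cl_mult n u' (cl_gen i) = cl_mult n (cl_gen (h i)) u'"
    using u' by (rule cl_liftsE)
  have "cl_mult n (cl_mult n u u') (cl_mult n v' v) = cl_mult n u (cl_mult n (cl_mult n u' v') v)"
    "cl_mult n (cl_mult n v' v) (cl_mult n u u') = cl_mult n v' (cl_mult n (cl_mult n v u) u')"
    by (simp_all only: cl_mult_assoc)
  then have "cl_mult n (cl_mult n u u') (cl_mult n v' v) = cl_one"
    "cl_mult n (cl_mult n v' v) (cl_mult n u u') = cl_one"
    using v v' by (simp_all add: cl_mult_one_left)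
  moreover have "cl_mult n (cl_mult n u u') (cl_gen i) = cl_mult n (cl_gen (g (h i))) (cl_mult n u u')"
    if i: "i \<in> {1..n}" for i
  proof -
    have "cl_mult n (cl_mult n u u') (cl_gen i) = cl_mult n u (cl_mult n (cl_gen (h i)) u')"
      using conj' i by (simp add: cl_mult_assoc)
    also have "\<dots> = cl_mult n (cl_mult n (cl_gen (g (h i))) u) u'"
      using conj h i by (simp add: cl_mult_assoc[symmetric] image_subset_iff)
    finally show ?thesis by (simp add: cl_mult_assoc)
  qed
  ultimately show ?thesis
    using v v' cl_parity_mult[of False u False u'] cl_parity_mult[of False v' False v]
    unfolding cl_lifts_def by (auto intro!: exI[of _ "cl_mult n v' v"])
qed

lemma cl_lifts_inv:
  assumes u: "u \<in> cl_lifts n g" and g: "g permutes {1..n}"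
  shows "cl_lifts n (inv' g) \<noteq> {}"
proof -
  obtain v where v: "cl_supported n u" "cl_parity False u" "cl_supported n v" "cl_parity False v"
    "cl_mult n u v = cl_one" "cl_mult n v u = cl_one"
    and conj: "\<forall>i\<in>{1..n}. cl_mult n u (cl_gen i) = cl_mult n (cl_gen (g i)) u"
    using u by (rule cl_liftsE)
  have "cl_mult n v (cl_gen i) = cl_mult n (cl_gen (inv' g i)) v" if i: "i \<in> {1..n}" for i
  proof -
    define j where "j = inv' g i"
    have "j \<in> {1..n}" "g j = i"
      unfolding j_def using i permutes_in_image[OF permutes_inv[OF g]] permutes_inverses(1)[OF g] by auto
    then have conj_j: "cl_mult n u (cl_gen j) = cl_mult n (cl_gen i) u" using conj by auto
    have "cl_mult n v (cl_gen i) = cl_mult n (cl_mult n v (cl_gen i)) (cl_mult n u v)"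
      using v by (simp add: cl_mult_one_right)
    also have "\<dots> = cl_mult n v (cl_mult n (cl_mult n (cl_gen i) u) v)"
      by (simp only: cl_mult_assoc)
    also have "\<dots> = cl_mult n (cl_mult n v u) (cl_mult n (cl_gen j) v)"
      by (simp only: conj_j[symmetric] cl_mult_assoc)
    also have "\<dots> = cl_mult n (cl_gen j) v"
      using v by (simp add: cl_mult_one_left)
    finally show ?thesis unfolding j_def .
  qed
  then have "v \<in> cl_lifts n (inv' g)"
    using v unfolding cl_lifts_def by (auto intro!: exI[of _ u])
  then show ?thesis by blast
qed

text \<open>The 3-cycle \<open>(a b c) = (a b)(b c)\<close> lifts to \<open>(e\<^sub>a - e\<^sub>b)(e\<^sub>b - e\<^sub>c)\<close>, and 3-cycles
  generate \<open>A\<^sub>n\<close>.\<close>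
lemma cl_lifts_nonempty:
  assumes "g \<in> carrier (alt_group n)"
  shows "cl_lifts n g \<noteq> {}"
proof -
  have three_cycle: "cl_lifts n h \<noteq> {}" "h permutes {1..n}" if "h \<in> three_cycles n" for h
  proof -
    from that obtain cs where cs: "h = cycle_of_list cs" "distinct cs" "length cs = 3" "set cs \<subseteq> {1..n}"
      by auto
    then obtain a b c where "cs = [a, b, c]" using stupid_lemma by blast
    with cs have "h = transpose a b \<circ> transpose b c"
      and "cl_mult n (cl_root a b) (cl_root b c) \<in> cl_lifts n (transpose a b \<circ> transpose b c)"
      by (auto intro!: cl_root_pair_in_lifts)
    then show "cl_lifts n h \<noteq> {}" by blast
    have "h \<in> carrier (alt_group n)" using that three_cycles_incl by blast
    then show "h permutes {1..n}" by (simp add: alt_group_carrier)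
  qed
  have "g \<in> generate (alt_group n) (three_cycles n)"
    using assms alt_group_carrier_as_three_cycles by blast
  then show ?thesis
  proof (induction g rule: generate.induct)
    case one
    show ?case unfolding alt_group_one using cl_one_in_lifts by blast
  next
    case (incl h)
    then show ?case by (rule three_cycle)
  next
    case (inv h)
    then obtain u where "u \<in> cl_lifts n h" using three_cycle(1) by blast
    then have "cl_lifts n (inv' h) \<noteq> {}" using cl_lifts_inv three_cycle(2)[OF inv] by blast
    moreover have "h \<in> carrier (alt_group n)" using inv three_cycles_incl by blast
    ultimately show ?case by (simp add: alt_group_inv_equality)
  next
    case (eng h1 h2)
    then obtain u1 u2 where "u1 \<in> cl_lifts n h1" "u2 \<in> cl_lifts n h2" by blast
    moreover have "h2 \<in> carrier (alt_group n)"
      using eng(2) alt_group_carrier_as_three_cycles[of n] by simp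
    then have "h2 permutes {1..n}" by (simp add: alt_group_carrier)
    then have "h2 ` {1..n} \<subseteq> {1..n}" by (simp add: permutes_image)
    ultimately show ?case unfolding alt_group_mult using cl_lifts_mult by blast
  qed
qed

lemma cl_lifts_nonzero:
  assumes "u \<in> cl_lifts n g"
  shows "u \<noteq> (\<lambda>S. 0)"
proof
  assume zero: "u = (\<lambda>S. 0)"
  obtain v where "cl_mult n u v = cl_one" using assms by (rule cl_liftsE)
  then have "cl_one {} = cl_mult n (\<lambda>S. 0) v {}" by (simp add: zero)
  then show False by (simp add: cl_one_def cl_mult_def)
qed

lemma cl_scale_cancel: "cl_scale a u = cl_scale b u \<Longrightarrow> u \<noteq> (\<lambda>S. 0) \<Longrightarrow> a = b"
  by (auto simp: cl_scale_def fun_eq_iff)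

text \<open>If \<open>u, u'\<close> both lift \<open>g\<close>, then \<open>u\<^sup>-\<^sup>1 u'\<close> is even and central, hence a scalar.\<close>
lemma cl_lifts_unique:
  assumes u: "u \<in> cl_lifts n g" and u': "u' \<in> cl_lifts n g"
  obtains c where "c \<noteq> 0" "u' = cl_scale c u"
proof -
  obtain v where v: "cl_supported n u" "cl_parity False u" "cl_supported n v" "cl_parity False v"
    "cl_mult n u v = cl_one" "cl_mult n v u = cl_one"
    and conj: "\<forall>i\<in>{1..n}. cl_mult n u (cl_gen i) = cl_mult n (cl_gen (g i)) u"
    using u by (rule cl_liftsE)
  obtain v' where v': "cl_supported n u'" "cl_parity False u'"
    and conj': "\<forall>i\<in>{1..n}. cl_mult n u' (cl_gen i) = cl_mult n (cl_gen (g i)) u'"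
    using u' by (rule cl_liftsE)
  define w where "w = cl_mult n v u'"
  have "cl_mult n w (cl_gen i) = cl_mult n (cl_gen i) w" if i: "i \<in> {1..n}" for i
  proof -
    have "cl_mult n v (cl_gen (g i)) = cl_mult n (cl_mult n v (cl_gen (g i))) (cl_mult n u v)"
      using v by (simp add: cl_mult_one_right)
    also have "\<dots> = cl_mult n v (cl_mult n (cl_mult n u (cl_gen i)) v)"
      using conj i by (simp add: cl_mult_assoc)
    also have "\<dots> = cl_mult n (cl_gen i) v"
      using v i by (simp add: cl_mult_one_left flip: cl_mult_assoc)
    finally have "cl_mult n v (cl_gen (g i)) = cl_mult n (cl_gen i) v" .
    then show ?thesis
      using conj' i by (simp add: w_def cl_mult_assoc flip: cl_mult_assoc[of n v])
  qed
  moreover have "cl_parity False w" "cl_supported n w"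
    using cl_parity_mult[OF v(4) v'(2)] by (simp_all add: w_def)
  ultimately have w_scalar: "w = cl_scale (w {}) cl_one"
    by (intro cl_even_central_eq_scalar) auto
  have "u' = cl_mult n (cl_mult n u v) u'"
    using v v' by (simp add: cl_mult_one_left)
  also have "\<dots> = cl_scale (w {}) u"
    by (subst cl_mult_assoc, fold w_def, subst w_scalar) (simp add: cl_mult_scale_right cl_mult_one_right v)
  finally have "u' = cl_scale (w {}) u" .
  moreover from this have "w {} \<noteq> 0"
    using cl_lifts_nonzero[OF u'] by (auto simp: cl_scale_def)
  ultimately show ?thesis using that by blast
qed

section \<open>The spin cocycle\<close>

definition cl_lift :: "nat \<Rightarrow> (nat \<Rightarrow> nat) \<Rightarrow> clifford" where
  "cl_lift n g = (SOME u. u \<in> cl_lifts n g)"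

definition lift_factor :: "nat \<Rightarrow> (nat \<Rightarrow> nat) \<Rightarrow> (nat \<Rightarrow> nat) \<Rightarrow> real" where
  "lift_factor n g h = (SOME c. c \<noteq> 0 \<and> cl_mult n (cl_lift n g) (cl_lift n h) = cl_scale c (cl_lift n (g \<circ> h)))"

text \<open>Rescaling the chosen lifts by nonzero reals changes the sign of \<open>lift_factor\<close> only by a
  coboundary.\<close>
definition spin_cocycle :: "nat \<Rightarrow> (nat \<Rightarrow> nat) \<Rightarrow> (nat \<Rightarrow> nat) \<Rightarrow> bool" where
  "spin_cocycle n g h \<longleftrightarrow> g \<in> carrier (alt_group n) \<and> h \<in> carrier (alt_group n) \<and> lift_factor n g h < 0"

lemma cl_lift_in_lifts: "g \<in> carrier (alt_group n) \<Longrightarrow> cl_lift n g \<in> cl_lifts n g"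
  unfolding cl_lift_def using cl_lifts_nonempty by (metis ex_in_conv someI_ex)

lemma cl_lift_mult:
  assumes g: "g \<in> carrier (alt_group n)" and h: "h \<in> carrier (alt_group n)"
  shows "lift_factor n g h \<noteq> 0"
    and "cl_mult n (cl_lift n g) (cl_lift n h) = cl_scale (lift_factor n g h) (cl_lift n (g \<circ> h))"
proof -
  have "h ` {1..n} \<subseteq> {1..n}" using h by (simp add: alt_group_carrier permutes_image)
  then have "cl_mult n (cl_lift n g) (cl_lift n h) \<in> cl_lifts n (g \<circ> h)"
    by (intro cl_lifts_mult cl_lift_in_lifts g h)
  then obtain c where "c \<noteq> 0 \<and> cl_mult n (cl_lift n g) (cl_lift n h) = cl_scale c (cl_lift n (g \<circ> h))"
    using cl_lifts_unique cl_lift_in_lifts[OF alt_group_comp_closed[OF g h]] by metis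
  then have "lift_factor n g h \<noteq> 0 \<and>
      cl_mult n (cl_lift n g) (cl_lift n h) = cl_scale (lift_factor n g h) (cl_lift n (g \<circ> h))"
    unfolding lift_factor_def by (rule someI)
  then show "lift_factor n g h \<noteq> 0"
    and "cl_mult n (cl_lift n g) (cl_lift n h) = cl_scale (lift_factor n g h) (cl_lift n (g \<circ> h))"
    by simp_all
qed

text \<open>Associativity of the Clifford product gives \<open>\<mu>(g,h) \<mu>(gh,k) = \<mu>(h,k) \<mu>(g,hk)\<close> for the lift
  factors \<open>\<mu>\<close>, and the sign of a product of nonzero reals is multiplicative.\<close>
lemma spin_cocycle_in_cocycles2_Z2: "spin_cocycle n \<in> cocycles2_Z2 (alt_group n)"
  unfolding cocycles2_Z2_def
proof (intro CollectI conjI allI impI ballI)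
  fix x y assume "x \<notin> carrier (alt_group n) \<or> y \<notin> carrier (alt_group n)"
  then show "\<not> spin_cocycle n x y" by (auto simp: spin_cocycle_def)
next
  fix g h k
  assume g: "g \<in> carrier (alt_group n)" and h: "h \<in> carrier (alt_group n)" and k: "k \<in> carrier (alt_group n)"
  let ?\<mu> = "lift_factor n"
  have gh: "g \<circ> h \<in> carrier (alt_group n)" and hk: "h \<circ> k \<in> carrier (alt_group n)"
    using g h k by (simp_all add: alt_group_comp_closed)
  have "cl_scale (?\<mu> g h * ?\<mu> (g \<circ> h) k) (cl_lift n (g \<circ> h \<circ> k)) =
      cl_mult n (cl_mult n (cl_lift n g) (cl_lift n h)) (cl_lift n k)"
    using g h k gh by (simp add: cl_lift_mult cl_mult_scale_left)
  also have "\<dots> = cl_mult n (cl_lift n g) (cl_mult n (cl_lift n h) (cl_lift n k))"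
    by (rule cl_mult_assoc)
  also have "\<dots> = cl_scale (?\<mu> h k * ?\<mu> g (h \<circ> k)) (cl_lift n (g \<circ> h \<circ> k))"
    using g h k hk by (simp add: cl_lift_mult cl_mult_scale_right comp_assoc mult.commute)
  finally have "?\<mu> g h * ?\<mu> (g \<circ> h) k = ?\<mu> h k * ?\<mu> g (h \<circ> k)"
    using cl_scale_cancel cl_lifts_nonzero cl_lift_in_lifts alt_group_comp_closed[OF gh k] by blast
  then have "(?\<mu> g h * ?\<mu> (g \<circ> h) k < 0) = (?\<mu> h k * ?\<mu> g (h \<circ> k) < 0)" by simp
  then have "((?\<mu> h k < 0) \<noteq> (?\<mu> (g \<circ> h) k < 0)) = ((?\<mu> g (h \<circ> k) < 0) \<noteq> (?\<mu> g h < 0))"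
    using cl_lift_mult(1) g h k gh hk by (auto simp: mult_less_0_iff linorder_neq_iff)
  then show "(spin_cocycle n h k \<noteq> spin_cocycle n (g \<otimes>\<^bsub>alt_group n\<^esub> h) k) =
      (spin_cocycle n g (h \<otimes>\<^bsub>alt_group n\<^esub> k) \<noteq> spin_cocycle n g h)"
    using g h k gh hk by (auto simp: spin_cocycle_def alt_group_mult)
qed

lemma spin_cocycle_involution:
  assumes g: "g \<in> carrier (alt_group n)" and g2: "g \<circ> g = id"
    and u: "u \<in> cl_lifts n g" and square: "cl_mult n u u = cl_scale c cl_one"
  shows "spin_cocycle n g g \<noteq> spin_cocycle n id id \<longleftrightarrow> c < 0"
proof -
  have id: "id \<in> carrier (alt_group n)"
    using group.is_monoid[OF alt_group_is_group] by (metis alt_group_one monoid.one_closed)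
  have one_nonzero: "cl_one \<noteq> (\<lambda>S. 0)" by (auto simp: cl_one_def fun_eq_iff)
  obtain l where l: "l \<noteq> 0" "cl_lift n id = cl_scale l cl_one"
    using cl_lifts_unique[OF cl_one_in_lifts cl_lift_in_lifts[OF id]] by blast
  obtain t where t: "t \<noteq> 0" "cl_lift n g = cl_scale t u"
    using cl_lifts_unique[OF u cl_lift_in_lifts[OF g]] by blast
  have "cl_scale (lift_factor n id id * l) cl_one = cl_scale (l * l) cl_one"
    using cl_lift_mult(2)[OF id id] l by (simp add: cl_mult_linear cl_mult_one_left mult.commute)
  then have "lift_factor n id id = l"
    using cl_scale_cancel[OF _ one_nonzero] l(1) by (metis mult_right_cancel)
  moreover have "cl_scale (lift_factor n g g * l) cl_one = cl_scale (t * t * c) cl_one"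
    using cl_lift_mult(2)[OF g g] g2 l t square by (simp add: cl_mult_linear mult_ac)
  then have "lift_factor n g g * l = (t * t) * c"
    using cl_scale_cancel[OF _ one_nonzero] by simp
  moreover have "t * t > 0" using t(1) not_real_square_gt_zero by blast
  ultimately have "lift_factor n g g * lift_factor n id id < 0 \<longleftrightarrow> c < 0"
    by (simp add: mult_less_0_iff)
  moreover have "lift_factor n g g \<noteq> 0" "lift_factor n id id \<noteq> 0"
    using cl_lift_mult(1) g id by blast+
  ultimately show ?thesis
    using g id by (auto simp: spin_cocycle_def mult_less_0_iff linorder_neq_iff)
qed

lemma cl_root_pair_square:
  assumes "distinct [a, b, c, d]" "{a, b, c, d} \<subseteq> {1..n}"
  shows "cl_mult n (cl_mult n (cl_root a b) (cl_root c d)) (cl_mult n (cl_root a b) (cl_root c d)) =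
    cl_scale (-4) cl_one"
proof -
  have anticommute: "cl_mult n (cl_root c d) (cl_root a b) = cl_scale (-1) (cl_mult n (cl_root a b) (cl_root c d))"
    using assms by (intro cl_root_anticommute) auto
  have "cl_mult n (cl_mult n (cl_root a b) (cl_root c d)) (cl_mult n (cl_root a b) (cl_root c d)) =
      cl_mult n (cl_root a b) (cl_mult n (cl_mult n (cl_root c d) (cl_root a b)) (cl_root c d))"
    by (simp only: cl_mult_assoc)
  also have "\<dots> = cl_scale (-1) (cl_mult n (cl_mult n (cl_root a b) (cl_root a b)) (cl_mult n (cl_root c d) (cl_root c d)))"
    unfolding anticommute cl_mult_scale_left cl_mult_scale_right by (simp only: cl_mult_assoc)
  also have "\<dots> = cl_scale (-4) cl_one"
    using assms by (simp add: cl_root_square cl_mult_linear cl_mult_one_left)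
  finally show ?thesis .
qed

lemma coboundary2_Z2_at_involution:
  assumes "monoid G" "f \<in> coboundaries2_Z2 G" "a \<in> carrier G" "a \<otimes>\<^bsub>G\<^esub> a = \<one>\<^bsub>G\<^esub>"
  shows "f a a = f \<one>\<^bsub>G\<^esub> \<one>\<^bsub>G\<^esub>"
  using assms by (auto simp: coboundaries2_Z2_def monoid.one_closed)

theorem alt_group_H2_Z2_nonzero:
  assumes n: "n \<ge> 4"
  shows "H2_Z2_nonzero (alt_group n)"
proof -
  define a where "a = transpose 1 2 \<circ> transpose (3::nat) 4"
  have a: "a \<in> carrier (alt_group n)" "a \<circ> a = id"
    using n unfolding a_def by (simp_all add: double_transposition_in_alt_group fun_eq_iff transpose_def)
  have "cl_mult n (cl_root 1 2) (cl_root 3 4) \<in> cl_lifts n a"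
    using n unfolding a_def by (intro cl_root_pair_in_lifts) auto
  moreover have "cl_mult n (cl_mult n (cl_root 1 2) (cl_root 3 4)) (cl_mult n (cl_root 1 2) (cl_root 3 4)) =
      cl_scale (-4) cl_one"
    using n by (intro cl_root_pair_square) auto
  ultimately have "spin_cocycle n a a \<noteq> spin_cocycle n id id"
    using spin_cocycle_involution[OF a] by simp
  then have "spin_cocycle n \<notin> coboundaries2_Z2 (alt_group n)"
    using coboundary2_Z2_at_involution[OF group.is_monoid[OF alt_group_is_group] _ a(1)] a(2)
    by (auto simp: alt_group_mult alt_group_one)
  then show ?thesis
    unfolding H2_Z2_nonzero_def using spin_cocycle_in_cocycles2_Z2 by blast
qed

lemma CHAR_eq_3_if_three_eq_0:
  assumes "(3::'a::field) = 0" shows "CHAR('a) = 3"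
proof -
  have dvd: "CHAR('a) dvd 3" using assms of_nat_eq_0_iff_char_dvd[of 3, where ?'a = 'a] by simp
  then have "CHAR('a) \<le> 3" by (rule dvd_imp_le) simp
  then consider "CHAR('a) = 0" | "CHAR('a) = 1" | "CHAR('a) = 2" | "CHAR('a) = 3" by linarith
  then show ?thesis using dvd by cases auto
qed

theorem propositionE:
  fixes v :: "'k::field \<Rightarrow> int" and n :: nat
  assumes "nonarch_local_field v"
    and "n \<ge> 7 \<or> (n = 6 \<and> CHAR('k) \<noteq> 3)"
  shows "(\<forall>\<rho> \<in> hom (alt_group n) (PSL2 TYPE('k)).
            \<exists>\<rho>' \<in> hom (alt_group n) (SL2 TYPE('k)).
              \<forall>\<sigma> \<in> carrier (alt_group n). PSL2_proj TYPE('k) (\<rho>' \<sigma>) = \<rho> \<sigma>)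
         \<and> H2_Z2_nonzero (alt_group n)"
proof
  show "\<forall>\<rho> \<in> hom (alt_group n) (PSL2 TYPE('k)).
      \<exists>\<rho>' \<in> hom (alt_group n) (SL2 TYPE('k)).
        \<forall>\<sigma> \<in> carrier (alt_group n). PSL2_proj TYPE('k) (\<rho>' \<sigma>) = \<rho> \<sigma>"
  proof
    fix \<rho> assume hom: "\<rho> \<in> hom (alt_group n) (PSL2 TYPE('k))"
    have "(3::'k) \<noteq> 0 \<and> n \<ge> 6 \<or> (3::'k) = 0 \<and> n \<ge> 7"
      using assms(2) CHAR_eq_3_if_three_eq_0[where 'a = 'k] by auto
    then have "\<forall>\<sigma> \<in> carrier (alt_group n). \<rho> \<sigma> = PSL2_proj TYPE('k) mat2_id"
      using alt_group_hom_PSL2_trivial_char_not_3[OF _ hom] alt_group_hom_PSL2_trivial_char_3[OF _ hom]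
      by (auto simp: PSL2_one)
    moreover have "(\<lambda>\<sigma>. mat2_id) \<in> hom (alt_group n) (SL2 TYPE('k))"
      by (rule homI) simp_all
    ultimately show "\<exists>\<rho>' \<in> hom (alt_group n) (SL2 TYPE('k)).
        \<forall>\<sigma> \<in> carrier (alt_group n). PSL2_proj TYPE('k) (\<rho>' \<sigma>) = \<rho> \<sigma>"
      by force
  qed
  show "H2_Z2_nonzero (alt_group n)"
    using assms(2) by (intro alt_group_H2_Z2_nonzero) auto
qed

end
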